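(* Let $d,\tilde d\in\mathbb{N}$, $G\subseteq\mathbb{R}^d$, $\tilde G\subseteq\mathbb{R}^{\tilde d}$, and let $\rho\colon G\to(0,\infty)$, $\tilde\rho\colon\tilde G\to(0,\infty)$ be Lebesgue integrable with $\ell_\rho(t)=\ell_{\tilde\rho}(t)$ for all $t\in(0,\infty)$. Let $\pi,\tilde\pi$ be the distributions induced by $\rho,\tilde\rho$, and $\mu$ the (common) auxiliary measure. Then $Q_\rho(t,B)=Q_{\tilde\rho}(t,B)$ for all $t\in(0,\infty)$ and Borel $B\subseteq(0,\infty)$, and \[ \mathrm{gap}_\pi(U_\rho)=\mathrm{gap}_\mu(Q_\rho)=\mathrm{gap}_\mu(Q_{\tilde\rho})=\mathrm{gap}_{\tilde\pi}(U_{\tilde\rho}). \]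
   Context: For an integrable $\rho\colon G\to(0,\infty)$, $G\subseteq\mathbb{R}^d$: $\pi(A)=\int_A\rho/\int_G\rho$; $G(t)=\{x\in G:\rho(x)\ge t\}$; $\ell_\rho(t)=\lambda_d(G(t))$; $U_t$ uniform on $G(t)$; $U_\rho(x,A)=\frac{1}{\rho(x)}\int_0^{\rho(x)}U_t(A)\,\mathrm{d}t$ (simple slice sampling); $\mu(B)=\int_B\ell_\rho(t)\,\mathrm{d}t/\int_0^\infty\ell_\rho(r)\,\mathrm{d}r$ on $(0,\infty)$; $Q_\rho(t,B)=\frac{1}{\lambda_d(G(t))}\int_{G(t)}\frac{\lambda_1(B\cap[0,\rho(x)])}{\rho(x)}\,\mathrm{d}x$. Spectral gaps: $\mathrm{gap}_\pi(U_\rho)=1-\|U_\rho-\mathbb{E}_\pi\|_{L_2(\pi)\to L_2(\pi)}$, $\mathrm{gap}_\mu(Q_\rho)=1-\|Q_\rho-\mathbb{E}_\mu\|_{L_2(\mu)\to L_2(\mu)}$, with $\mathbb{E}_\pi,\mathbb{E}_\mu$ mapping a function to the constant equal to its mean; the operators act by $Kf(x)=\int f(y)K(x,\mathrm{d}y)$. *)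

theory Defs
  imports "HOL-Analysis.Analysis"
begin

definition superlevel :: "'a set \<Rightarrow> ('a \<Rightarrow> real) \<Rightarrow> real \<Rightarrow> 'a set" where
  "superlevel G \<rho> t = {x \<in> G. t \<le> \<rho> x}"

definition level_fun :: "'a::euclidean_space set \<Rightarrow> ('a \<Rightarrow> real) \<Rightarrow> real \<Rightarrow> real" where
  "level_fun G \<rho> t = measure lebesgue (superlevel G \<rho> t)"

definition target :: "'a::euclidean_space set \<Rightarrow> ('a \<Rightarrow> real) \<Rightarrow> 'a measure" where
  "target G \<rho> = density lebesgue
     (\<lambda>x. ennreal (indicator G x * \<rho> x / (LINT y:G|lebesgue. \<rho> y)))"

definition unif_level :: "'a::euclidean_space set \<Rightarrow> ('a \<Rightarrow> real) \<Rightarrow> real \<Rightarrow> 'a measure" where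
  "unif_level G \<rho> t = uniform_measure lebesgue (superlevel G \<rho> t)"

definition slice_kernel :: "'a::euclidean_space set \<Rightarrow> ('a \<Rightarrow> real) \<Rightarrow> 'a \<Rightarrow> 'a measure" where
  "slice_kernel G \<rho> x = measure_of UNIV (sets lebesgue)
     (\<lambda>A. ennreal ((1 / \<rho> x) * (LINT t:{0..\<rho> x}|lborel. measure (unif_level G \<rho> t) A)))"

definition aux_measure :: "'a::euclidean_space set \<Rightarrow> ('a \<Rightarrow> real) \<Rightarrow> real measure" where
  "aux_measure G \<rho> = density lborel
     (\<lambda>t. ennreal (indicator {0<..} t * level_fun G \<rho> t / (LINT r:{0<..}|lborel. level_fun G \<rho> r)))"

definition Q_fun :: "'a::euclidean_space set \<Rightarrow> ('a \<Rightarrow> real) \<Rightarrow> real \<Rightarrow> real set \<Rightarrow> real" where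
  "Q_fun G \<rho> t B = (1 / measure lebesgue (superlevel G \<rho> t)) *
     (LINT x:superlevel G \<rho> t|lebesgue. measure lborel (B \<inter> {0..\<rho> x}) / \<rho> x)"

definition Q_kernel :: "'a::euclidean_space set \<Rightarrow> ('a \<Rightarrow> real) \<Rightarrow> real \<Rightarrow> real measure" where
  "Q_kernel G \<rho> t = measure_of UNIV (sets borel) (\<lambda>B. ennreal (Q_fun G \<rho> t B))"

definition kernel_op :: "('a \<Rightarrow> 'b measure) \<Rightarrow> ('b \<Rightarrow> real) \<Rightarrow> 'a \<Rightarrow> real" where
  "kernel_op K f = (\<lambda>x. \<integral>y. f y \<partial>K x)"

definition L2_opnorm :: "'a measure \<Rightarrow> (('a \<Rightarrow> real) \<Rightarrow> ('a \<Rightarrow> real)) \<Rightarrow> ereal" where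
  "L2_opnorm M T =
    (let N = (SUP f \<in> {f \<in> borel_measurable M. (\<integral>\<^sup>+x. ennreal ((f x)\<^sup>2) \<partial>M) \<le> 1}.
                 (\<integral>\<^sup>+x. ennreal ((T f x)\<^sup>2) \<partial>M))
     in if N = \<infinity> then \<infinity> else ereal (sqrt (enn2real N)))"

definition spectral_gap :: "'a measure \<Rightarrow> ('a \<Rightarrow> 'a measure) \<Rightarrow> ereal" where
  "spectral_gap M K = 1 - L2_opnorm M (\<lambda>f x. kernel_op K f x - (\<integral>y. f y \<partial>M))"

end

(* Let H = {(x, t). 0 < t <= rho x} be the hypograph of rho. The uniform distribution on H has
   marginals pi and mu, and its conditional distributions are V x, uniform on [0, rho x], and U t,
   uniform on G(t). Hence U_rho = V ; U and Q_rho = U ; V are the two compositions of a pair of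
   Markov kernels in duality, and the centred operators g |-> V g - E_mu g and f |-> U f - E_pi f
   are mutually adjoint contractions between L2(mu) and L2(pi). For such a pair A, B one has
   ||A B|| = ||B||^2 = ||B A||, so U_rho and Q_rho have the same spectral gap. Finally Q_rho(t, .)
   only involves the law of rho on G(t), whose tail is given by ell_rho; so Q_rho and mu, and with
   them the gaps, are determined by ell_rho. *)

theory Submission
  imports Defs "HOL-Probability.Probability"
begin

lemma sigma_finite_lebesgue: "sigma_finite_measure (lebesgue :: 'a::euclidean_space measure)"
proof -
  obtain A :: "'a set set" where A: "countable A" "A \<subseteq> sets lborel" "\<Union>A = space lborel"
    "\<forall>a\<in>A. emeasure lborel a \<noteq> \<infinity>"
    using lborel.sigma_finite_countable by blast
  show ?thesis
    unfolding sigma_finite_measure_def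
    by (rule exI[of _ A]) (use A in auto)
qed

interpretation lebesgue: sigma_finite_measure "lebesgue :: 'a::euclidean_space measure"
  by (rule sigma_finite_lebesgue)

interpretation lebesgue_lborel: pair_sigma_finite "lebesgue :: 'a::euclidean_space measure" lborel
  by (simp add: pair_sigma_finite_def sigma_finite_lebesgue sigma_finite_lborel)

lemma measure_of_eq_self:
  assumes "sets M = S" "space M = \<Omega>" "\<And>A. A \<in> S \<Longrightarrow> F A = emeasure M A"
  shows "measure_of \<Omega> S F = M"
proof -
  have "measure_of \<Omega> S F = measure_of \<Omega> S (emeasure M)"
  proof (rule measure_of_eq)
    show "S \<subseteq> Pow \<Omega>" using sets.sets_into_space assms(1,2) by auto
  next
    fix A assume "A \<in> sigma_sets \<Omega> S"
    then show "F A = emeasure M A" using assms sets.sigma_sets_eq by metis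
  qed
  then show ?thesis using measure_of_of_measure[of M] assms(1,2) by simp
qed

lemma abs_mult_le_sum_squares: "\<bar>(a::real) * b\<bar> \<le> a\<^sup>2 + b\<^sup>2"
proof -
  have "2 * \<bar>a * b\<bar> \<le> a\<^sup>2 + b\<^sup>2"
    using sum_squares_bound[of "\<bar>a\<bar>" "\<bar>b\<bar>"] by (simp add: abs_mult mult.assoc)
  then show ?thesis using abs_ge_zero[of "a * b"] by linarith
qed

lemma Cauchy_Schwarz_integral:
  fixes f g :: "'a \<Rightarrow> real"
  assumes [measurable]: "f \<in> borel_measurable M" "g \<in> borel_measurable M"
    and f2: "integrable M (\<lambda>x. (f x)\<^sup>2)" and g2: "integrable M (\<lambda>x. (g x)\<^sup>2)"
  shows "integrable M (\<lambda>x. f x * g x)"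
    and "(\<integral>x. f x * g x \<partial>M)\<^sup>2 \<le> (\<integral>x. (f x)\<^sup>2 \<partial>M) * (\<integral>x. (g x)\<^sup>2 \<partial>M)"
proof -
  show fg: "integrable M (\<lambda>x. f x * g x)"
  proof (rule Bochner_Integration.integrable_bound[OF Bochner_Integration.integrable_add[OF f2 g2]])
    show "AE x in M. norm (f x * g x) \<le> norm ((f x)\<^sup>2 + (g x)\<^sup>2)"
      by (simp add: abs_mult_le_sum_squares)
  qed measurable
  define a b c where "a = (\<integral>x. (g x)\<^sup>2 \<partial>M)" and "b = (\<integral>x. f x * g x \<partial>M)"
    and "c = (\<integral>x. (f x)\<^sup>2 \<partial>M)"
  have quadratic_nonneg: "0 \<le> c - 2 * s * b + s\<^sup>2 * a" for s
  proof -
    have "(\<lambda>x. (f x - s * g x)\<^sup>2) = (\<lambda>x. (f x)\<^sup>2 - 2 * s * (f x * g x) + s\<^sup>2 * (g x)\<^sup>2)"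
      by (auto simp: power2_eq_square algebra_simps)
    then have "(\<integral>x. (f x - s * g x)\<^sup>2 \<partial>M) = c - 2 * s * b + s\<^sup>2 * a"
      using f2 g2 fg by (simp add: a_def b_def c_def)
    moreover have "0 \<le> (\<integral>x. (f x - s * g x)\<^sup>2 \<partial>M)" by simp
    ultimately show ?thesis by simp
  qed
  show "b\<^sup>2 \<le> c * a"
  proof (cases "a = 0")
    case True
    have "b = 0"
    proof (rule ccontr)
      assume "b \<noteq> 0"
      then have "c - 2 * ((c + 1) / (2 * b)) * b = -1" by (simp add: field_simps)
      then show False using quadratic_nonneg[of "(c + 1) / (2 * b)"] True by simp
    qed
    then show ?thesis using True by simp
  next
    case False
    then have "0 < a" unfolding a_def by (simp add: less_le)
    have "0 \<le> c - 2 * (b / a) * b + (b / a)\<^sup>2 * a" by (rule quadratic_nonneg)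
    also have "\<dots> = c - b\<^sup>2 / a" using \<open>0 < a\<close> by (simp add: field_simps power2_eq_square)
    finally show ?thesis using \<open>0 < a\<close> by (simp add: field_simps mult.commute)
  qed
qed

lemma (in subprob_space) square_integral_le_nn_integral_square:
  fixes f :: "'a \<Rightarrow> real"
  assumes [measurable]: "f \<in> borel_measurable M"
  shows "ennreal ((\<integral>x. f x \<partial>M)\<^sup>2) \<le> (\<integral>\<^sup>+x. ennreal ((f x)\<^sup>2) \<partial>M)"
proof (cases "integrable M (\<lambda>x. (f x)\<^sup>2)")
  case True
  have "(\<integral>x. f x * 1 \<partial>M)\<^sup>2 \<le> (\<integral>x. (f x)\<^sup>2 \<partial>M) * (\<integral>x. 1\<^sup>2 \<partial>M)"
    by (rule Cauchy_Schwarz_integral(2)) (use True in auto)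
  also have "\<dots> \<le> (\<integral>x. (f x)\<^sup>2 \<partial>M)"
  proof (rule mult_left_le)
    show "(\<integral>x. (1::real)\<^sup>2 \<partial>M) \<le> 1" using subprob_measure_le_1[of "space M"] by simp
  qed simp
  finally have "(\<integral>x. f x \<partial>M)\<^sup>2 \<le> (\<integral>x. (f x)\<^sup>2 \<partial>M)" by simp
  moreover have "(\<integral>\<^sup>+x. ennreal ((f x)\<^sup>2) \<partial>M) = ennreal (\<integral>x. (f x)\<^sup>2 \<partial>M)"
    by (rule nn_integral_eq_integral) (use True in auto)
  ultimately show ?thesis by simp
next
  case False
  have "\<not> (\<integral>\<^sup>+x. ennreal ((f x)\<^sup>2) \<partial>M) < \<infinity>"
    using integrableI_nonneg[of "\<lambda>x. (f x)\<^sup>2" M] False by auto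
  then show ?thesis using top.not_eq_extremum by force
qed

lemma (in subprob_space) nn_integral_const_le: "(\<integral>\<^sup>+x. c \<partial>M) \<le> c"
  using mult_left_mono[OF subprob_emeasure_le_1, of c] by (simp add: mult.commute)

lemma ennreal_mult_divide_cancel: "a \<noteq> 0 \<Longrightarrow> a \<noteq> \<top> \<Longrightarrow> (a::ennreal) * (b / a) = b"
  by (simp add: ennreal_times_divide mult.commute[of a] ennreal_mult_divide_eq)

lemma ennreal_divide_self_le: "(a::ennreal) / a \<le> 1"
proof (cases a)
  case (real r)
  then show ?thesis by (cases "r = 0") (auto simp: divide_ennreal)
qed (simp add: ennreal_top_divide)

lemma subprob_space_uniform_measure:
  assumes "S \<in> sets M" "space M \<noteq> {}"
  shows "subprob_space (uniform_measure M S)"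
proof (rule subprob_spaceI)
  show "emeasure (uniform_measure M S) (space (uniform_measure M S)) \<le> 1"
    using assms sets.sets_into_space[OF assms(1)]
    by (simp add: Int_absorb2 ennreal_divide_self_le)
qed (use assms in auto)

lemma iterated_integral_kernel:
  fixes F :: "'a \<Rightarrow> 'b \<Rightarrow> real"
  assumes K[measurable]: "K \<in> W \<rightarrow>\<^sub>M subprob_algebra N"
    and F[measurable]: "(\<lambda>(t, x). F t x) \<in> borel_measurable (W \<Otimes>\<^sub>M N)"
    and integral_measurable: "(\<lambda>t. \<integral>x. F t x \<partial>K t) \<in> borel_measurable W"
    and finite: "(\<integral>\<^sup>+t. \<integral>\<^sup>+x. ennreal \<bar>F t x\<bar> \<partial>K t \<partial>W) < \<infinity>"
  shows "AE t in W. integrable (K t) (F t)"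
    and "integrable W (\<lambda>t. \<integral>x. F t x \<partial>K t)"
    and "(\<integral>t. \<integral>x. F t x \<partial>K t \<partial>W) = enn2real (\<integral>\<^sup>+t. \<integral>\<^sup>+x. ennreal (F t x) \<partial>K t \<partial>W)
           - enn2real (\<integral>\<^sup>+t. \<integral>\<^sup>+x. ennreal (- F t x) \<partial>K t \<partial>W)"
proof -
  have F_K: "F t \<in> borel_measurable (K t)" if "t \<in> space W" for t
    using measurable_Pair2[OF F that] sets_kernel[OF K that] by (simp cong: measurable_cong_sets)
  define p where "p t = (\<integral>\<^sup>+x. ennreal (F t x) \<partial>K t)" for t
  define q where "q t = (\<integral>\<^sup>+x. ennreal (- F t x) \<partial>K t)" for t
  have [measurable]: "p \<in> borel_measurable W" "q \<in> borel_measurable W"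
    unfolding p_def q_def by (intro nn_integral_measurable_subprob_algebra2[OF _ K]; measurable)+
  have abs_split: "(\<integral>\<^sup>+x. ennreal \<bar>F t x\<bar> \<partial>K t) = p t + q t" if "t \<in> space W" for t
  proof -
    have "(\<integral>\<^sup>+x. ennreal \<bar>F t x\<bar> \<partial>K t) = (\<integral>\<^sup>+x. ennreal (F t x) + ennreal (- F t x) \<partial>K t)"
      by (intro nn_integral_cong) (auto simp: ennreal_neg abs_real_def)
    also have "\<dots> = p t + q t"
      unfolding p_def q_def using F_K[OF that] by (intro nn_integral_add) auto
    finally show ?thesis .
  qed
  have "(\<integral>\<^sup>+t. p t \<partial>W) + (\<integral>\<^sup>+t. q t \<partial>W) < \<infinity>"
    using finite by (simp add: abs_split nn_integral_add[symmetric] cong: nn_integral_cong)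
  then have p_finite: "(\<integral>\<^sup>+t. p t \<partial>W) < \<infinity>" and q_finite: "(\<integral>\<^sup>+t. q t \<partial>W) < \<infinity>"
    by (auto simp: ennreal_add_less_top)
  have AE_p: "AE t in W. p t \<noteq> \<infinity>"
    using p_finite by (intro nn_integral_PInf_AE) auto
  have AE_q: "AE t in W. q t \<noteq> \<infinity>"
    using q_finite by (intro nn_integral_PInf_AE) auto
  show AE_integrable: "AE t in W. integrable (K t) (F t)"
    using AE_p AE_q AE_space
    by eventually_elim (auto simp: integrable_iff_bounded F_K abs_split less_top)
  have integrable_enn2real: "integrable W (\<lambda>t. enn2real (s t))"
    and integral_enn2real: "(\<integral>t. enn2real (s t) \<partial>W) = enn2real (\<integral>\<^sup>+t. s t \<partial>W)"
    if [measurable]: "s \<in> borel_measurable W" and "(\<integral>\<^sup>+t. s t \<partial>W) < \<infinity>" for s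
  proof -
    have AE_s: "AE t in W. s t \<noteq> \<infinity>" using that by (intro nn_integral_PInf_AE) auto
    have nn_eq: "(\<integral>\<^sup>+t. ennreal (enn2real (s t)) \<partial>W) = (\<integral>\<^sup>+t. s t \<partial>W)"
      by (rule nn_integral_cong_AE) (use AE_s in \<open>auto simp: ennreal_enn2real_if\<close>)
    show "integrable W (\<lambda>t. enn2real (s t))"
      using that(2) by (intro integrableI_bounded) (auto simp: nn_eq)
    show "(\<integral>t. enn2real (s t) \<partial>W) = enn2real (\<integral>\<^sup>+t. s t \<partial>W)"
      by (subst integral_eq_nn_integral) (auto simp: nn_eq)
  qed
  have AE_eq: "AE t in W. (\<integral>x. F t x \<partial>K t) = enn2real (p t) - enn2real (q t)"
    using AE_integrable by eventually_elim (simp add: real_lebesgue_integral_def p_def q_def)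
  show "integrable W (\<lambda>t. \<integral>x. F t x \<partial>K t)"
    using AE_eq integrable_enn2real[of p] integrable_enn2real[of q] p_finite q_finite
    by (intro integrable_cong_AE_imp[OF Bochner_Integration.integrable_diff integral_measurable])
       (auto simp: eq_commute)
  have "(\<integral>t. \<integral>x. F t x \<partial>K t \<partial>W) = (\<integral>t. enn2real (p t) - enn2real (q t) \<partial>W)"
    by (rule integral_cong_AE) (use AE_eq integral_measurable in auto)
  also have "\<dots> = enn2real (\<integral>\<^sup>+t. p t \<partial>W) - enn2real (\<integral>\<^sup>+t. q t \<partial>W)"
    using p_finite q_finite integrable_enn2real[of p] integrable_enn2real[of q]
    by (simp add: integral_enn2real)
  finally show "(\<integral>t. \<integral>x. F t x \<partial>K t \<partial>W) = enn2real (\<integral>\<^sup>+t. \<integral>\<^sup>+x. ennreal (F t x) \<partial>K t \<partial>W)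
      - enn2real (\<integral>\<^sup>+t. \<integral>\<^sup>+x. ennreal (- F t x) \<partial>K t \<partial>W)"
    by (simp add: p_def q_def)
qed

lemma integral_bind_real:
  fixes f :: "'b \<Rightarrow> real"
  assumes K[measurable]: "K \<in> W \<rightarrow>\<^sub>M subprob_algebra N" and f[measurable]: "f \<in> borel_measurable N"
    and finite: "(\<integral>\<^sup>+x. ennreal \<bar>f x\<bar> \<partial>(W \<bind> K)) < \<infinity>" and "space W \<noteq> {}"
  shows "integral\<^sup>L (W \<bind> K) f = (\<integral>t. integral\<^sup>L (K t) f \<partial>W)"
proof -
  have [measurable_cong]: "sets (W \<bind> K) = sets N"
    using sets_kernel[OF K] \<open>space W \<noteq> {}\<close> by (rule sets_bind)
  note nn_bind = nn_integral_bind[OF _ K]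
  note iterated = iterated_integral_kernel[of K W N "\<lambda>_. f"]
  have "(\<integral>\<^sup>+t. \<integral>\<^sup>+x. ennreal \<bar>f x\<bar> \<partial>K t \<partial>W) < \<infinity>"
    using finite by (simp add: nn_bind)
  then have "(\<integral>t. integral\<^sup>L (K t) f \<partial>W) = enn2real (\<integral>\<^sup>+x. ennreal (f x) \<partial>(W \<bind> K))
      - enn2real (\<integral>\<^sup>+x. ennreal (- f x) \<partial>(W \<bind> K))"
    by (subst iterated(3)) (auto simp: nn_bind intro: integral_measurable_subprob_algebra[OF f])
  also have "\<dots> = integral\<^sup>L (W \<bind> K) f"
    using finite by (intro real_lebesgue_integral_def[symmetric]) (simp add: integrable_iff_bounded)
  finally show ?thesis ..
qed

lemma emeasure_bind_uniform_measure:
  assumes K[measurable]: "K \<in> M \<rightarrow>\<^sub>M subprob_algebra N" and S[measurable]: "S \<in> sets M"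
    and S_finite: "emeasure M S < \<infinity>" and A[measurable]: "A \<in> sets N" and "space M \<noteq> {}"
  shows "emeasure (uniform_measure M S \<bind> K) A
    = ennreal ((\<integral>y. indicator S y * measure (K y) A \<partial>M) / measure M S)"
proof -
  have K_S: "K \<in> uniform_measure M S \<rightarrow>\<^sub>M subprob_algebra N"
    using K by (simp cong: measurable_cong_sets)
  have subprob_K: "subprob_space (K y)" if "y \<in> space M" for y
    using measurable_space[OF K that] by (simp add: space_subprob_algebra)
  have emeasure_K: "emeasure (K y) A * indicator S y = ennreal (indicator S y * measure (K y) A)" for y
    using subprob_K[of y] sets.sets_into_space[OF S]
    by (cases "y \<in> S") (auto simp: subprob_space.emeasure_subprob_space_less_top emeasure_eq_ennreal_measure)
  have integrable: "integrable M (\<lambda>y. indicator S y * measure (K y) A)"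
  proof (rule Bochner_Integration.integrable_bound[of _ "indicator S"])
    show "integrable M (indicator S :: _ \<Rightarrow> real)"
      using S_finite by (intro integrable_real_indicator) auto
    show "AE y in M. norm (indicator S y * measure (K y) A) \<le> norm (indicator S y :: real)"
      using subprob_K by (auto simp: indicator_def subprob_space.subprob_measure_le_1)
  qed (simp add: measure_def)
  have "emeasure (uniform_measure M S \<bind> K) A = (\<integral>\<^sup>+y. emeasure (K y) A \<partial>uniform_measure M S)"
    using \<open>space M \<noteq> {}\<close> by (intro emeasure_bind[OF _ K_S A]) simp
  also have "\<dots> = (\<integral>\<^sup>+y. emeasure (K y) A * indicator S y \<partial>M) / emeasure M S"
    by (rule nn_integral_uniform_measure) measurable
  also have "(\<integral>\<^sup>+y. emeasure (K y) A * indicator S y \<partial>M) = ennreal (\<integral>y. indicator S y * measure (K y) A \<partial>M)"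
    unfolding emeasure_K by (rule nn_integral_eq_integral[OF integrable]) simp
  also have "ennreal (\<integral>y. indicator S y * measure (K y) A \<partial>M) / emeasure M S
      = ennreal ((\<integral>y. indicator S y * measure (K y) A \<partial>M) / measure M S)"
  proof (cases "measure M S = 0")
    case True
    then have "S \<in> null_sets M"
      using S_finite by (simp add: null_sets_def emeasure_eq_ennreal_measure less_top)
    then have "(\<integral>y. indicator S y * measure (K y) A \<partial>M) = 0"
      by (intro integral_eq_zero_AE) (auto elim: AE_mp[OF AE_not_in] simp: indicator_def)
    then show ?thesis by simp
  next
    case False
    then show ?thesis
      using S_finite by (simp add: emeasure_eq_ennreal_measure less_top divide_ennreal
          integral_nonneg subprob_K measure_nonneg zero_less_measure_iff)
  qed
  finally show ?thesis .
qed

section \<open>Adjoint contractions between \<open>L\<^sup>2\<close> spaces\<close>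

definition square_integrable :: "'a measure \<Rightarrow> ('a \<Rightarrow> real) \<Rightarrow> bool" where
  "square_integrable M f \<longleftrightarrow> f \<in> borel_measurable M \<and> integrable M (\<lambda>x. (f x)\<^sup>2)"

definition sq_norm :: "'a measure \<Rightarrow> ('a \<Rightarrow> real) \<Rightarrow> real" where
  "sq_norm M f = (\<integral>x. (f x)\<^sup>2 \<partial>M)"

definition L2_unit_ball :: "'a measure \<Rightarrow> ('a \<Rightarrow> real) set" where
  "L2_unit_ball M = {f. square_integrable M f \<and> sq_norm M f \<le> 1}"

definition sq_opnorm :: "'a measure \<Rightarrow> 'b measure \<Rightarrow> (('a \<Rightarrow> real) \<Rightarrow> ('b \<Rightarrow> real)) \<Rightarrow> real" where
  "sq_opnorm M N B = (SUP f \<in> L2_unit_ball M. sq_norm N (B f))"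

lemma sq_norm_nonneg: "0 \<le> sq_norm M f"
  unfolding sq_norm_def by simp

lemma zero_in_L2_unit_ball: "(\<lambda>_. 0) \<in> L2_unit_ball M"
  by (simp add: L2_unit_ball_def square_integrable_def sq_norm_def)

lemma square_integrable_mult:
  "square_integrable M f \<Longrightarrow> square_integrable M (\<lambda>x. c * f x) \<and> sq_norm M (\<lambda>x. c * f x) = c\<^sup>2 * sq_norm M f"
  unfolding square_integrable_def sq_norm_def by (auto simp: power_mult_distrib)

lemma Cauchy_Schwarz_sq_norm:
  "square_integrable M u \<Longrightarrow> square_integrable M v \<Longrightarrow> (\<integral>x. u x * v x \<partial>M)\<^sup>2 \<le> sq_norm M u * sq_norm M v"
  using Cauchy_Schwarz_integral(2)[of u M v] unfolding square_integrable_def sq_norm_def by auto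

lemma sq_norm_eq_integral_mult_self: "sq_norm M u = (\<integral>x. u x * u x \<partial>M)"
  unfolding sq_norm_def by (simp add: power2_eq_square)

lemma nn_integral_square_eq_sq_norm:
  "square_integrable M f \<Longrightarrow> (\<integral>\<^sup>+x. ennreal ((f x)\<^sup>2) \<partial>M) = ennreal (sq_norm M f)"
  unfolding square_integrable_def sq_norm_def by (intro nn_integral_eq_integral) auto

lemma square_integrable_iff_nn_integral:
  "square_integrable M f \<longleftrightarrow> f \<in> borel_measurable M \<and> (\<integral>\<^sup>+x. ennreal ((f x)\<^sup>2) \<partial>M) < \<infinity>"
  using nn_integral_square_eq_sq_norm[of M f]
  by (auto simp: square_integrable_def integrable_iff_bounded)

locale adjoint_contractions =
  fixes M :: "'a measure" and N :: "'b measure"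
    and A :: "('b \<Rightarrow> real) \<Rightarrow> 'a \<Rightarrow> real" and B :: "('a \<Rightarrow> real) \<Rightarrow> 'b \<Rightarrow> real"
  assumes B_contraction: "\<And>f. square_integrable M f \<Longrightarrow>
      square_integrable N (B f) \<and> sq_norm N (B f) \<le> sq_norm M f"
    and A_contraction: "\<And>g. square_integrable N g \<Longrightarrow>
      square_integrable M (A g) \<and> sq_norm M (A g) \<le> sq_norm N g"
    and adjoint: "\<And>f g. square_integrable M f \<Longrightarrow> square_integrable N g \<Longrightarrow>
      (\<integral>x. A g x * f x \<partial>M) = (\<integral>t. g t * B f t \<partial>N)"
    and A_mult: "\<And>c g. A (\<lambda>t. c * g t) = (\<lambda>x. c * A g x)"
    and B_mult: "\<And>c f. B (\<lambda>x. c * f x) = (\<lambda>t. c * B f t)"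
begin

lemma swap: "adjoint_contractions N M B A"
proof
  fix f g assume "square_integrable N f" "square_integrable M g"
  then show "(\<integral>x. B g x * f x \<partial>N) = (\<integral>t. g t * A f t \<partial>M)"
    using adjoint[of g f] by (simp add: mult.commute)
qed (use B_contraction A_contraction A_mult B_mult in auto)

lemma bdd_above_sq_norm_B: "bdd_above ((\<lambda>f. sq_norm N (B f)) ` L2_unit_ball M)"
  by (rule bdd_aboveI[of _ 1]) (use B_contraction in \<open>force simp: L2_unit_ball_def\<close>)

lemma sq_norm_B_le_sq_opnorm: "f \<in> L2_unit_ball M \<Longrightarrow> sq_norm N (B f) \<le> sq_opnorm M N B"
  unfolding sq_opnorm_def by (rule cSup_upper[OF _ bdd_above_sq_norm_B]) auto

lemma sq_opnorm_nonneg: "0 \<le> sq_opnorm M N B"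
  using sq_norm_B_le_sq_opnorm[OF zero_in_L2_unit_ball] sq_norm_nonneg[of N "B (\<lambda>_. 0)"] by linarith

lemma sq_norm_B_le:
  assumes f: "square_integrable M f"
  shows "sq_norm N (B f) \<le> sq_opnorm M N B * sq_norm M f"
proof (cases "sq_norm M f = 0")
  case True
  then show ?thesis using B_contraction[OF f] by simp
next
  case False
  then have pos: "0 < sq_norm M f" using sq_norm_nonneg[of M f] by simp
  define c where "c = 1 / sqrt (sq_norm M f)"
  have c2: "c\<^sup>2 = 1 / sq_norm M f" using pos by (simp add: c_def power_divide)
  then have "(\<lambda>x. c * f x) \<in> L2_unit_ball M"
    using square_integrable_mult[OF f, of c] pos by (simp add: L2_unit_ball_def)
  then have "sq_norm N (B (\<lambda>x. c * f x)) \<le> sq_opnorm M N B" by (rule sq_norm_B_le_sq_opnorm)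
  moreover have "sq_norm N (B (\<lambda>x. c * f x)) = c\<^sup>2 * sq_norm N (B f)"
    unfolding B_mult using square_integrable_mult[of N "B f" c] B_contraction[OF f] by simp
  ultimately show ?thesis using c2 pos by (simp add: divide_le_eq)
qed

lemma sq_opnorm_A_le_sq_opnorm_B: "sq_opnorm N M A \<le> sq_opnorm M N B"
  unfolding sq_opnorm_def[of N M A]
proof (rule cSUP_least)
  show "L2_unit_ball N \<noteq> {}" using zero_in_L2_unit_ball by auto
next
  fix g assume "g \<in> L2_unit_ball N"
  then have g: "square_integrable N g" and g1: "sq_norm N g \<le> 1" by (auto simp: L2_unit_ball_def)
  define u where "u = A g"
  have u: "square_integrable M u" using A_contraction[OF g] by (simp add: u_def)
  have Bu: "square_integrable N (B u)" using B_contraction[OF u] by simp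
  have "sq_norm M u = (\<integral>t. g t * B u t \<partial>N)"
    unfolding sq_norm_eq_integral_mult_self using adjoint[OF u g] by (simp add: u_def)
  then have "(sq_norm M u)\<^sup>2 \<le> sq_norm N g * sq_norm N (B u)"
    using Cauchy_Schwarz_sq_norm[OF g Bu] by simp
  also have "\<dots> \<le> 1 * (sq_opnorm M N B * sq_norm M u)"
    by (intro mult_mono g1 sq_norm_B_le u) (auto intro: sq_norm_nonneg)
  finally have "sq_norm M u * sq_norm M u \<le> sq_opnorm M N B * sq_norm M u"
    by (simp add: power2_eq_square)
  then show "sq_norm M (A g) \<le> sq_opnorm M N B"
    using sq_opnorm_nonneg sq_norm_nonneg[of M u]
    by (cases "sq_norm M u = 0") (auto simp: u_def mult_le_cancel_right)
qed

lemma sq_opnorm_comp: "sq_opnorm M M (\<lambda>f. A (B f)) = (sq_opnorm M N B)\<^sup>2"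
proof (rule antisym)
  interpret swapped: adjoint_contractions N M B A by (rule swap)
  have AB_contraction: "square_integrable M (A (B f)) \<and> sq_norm M (A (B f)) \<le> sq_norm M f"
    if "square_integrable M f" for f
    using B_contraction[OF that] A_contraction[of "B f"] by fastforce
  show "sq_opnorm M M (\<lambda>f. A (B f)) \<le> (sq_opnorm M N B)\<^sup>2"
    unfolding sq_opnorm_def[of M M]
  proof (rule cSUP_least)
    show "L2_unit_ball M \<noteq> {}" using zero_in_L2_unit_ball by auto
  next
    fix f assume "f \<in> L2_unit_ball M"
    then have f: "square_integrable M f" and f1: "sq_norm M f \<le> 1" by (auto simp: L2_unit_ball_def)
    have "sq_norm M (A (B f)) \<le> sq_opnorm N M A * sq_norm N (B f)"
      using B_contraction[OF f] by (intro swapped.sq_norm_B_le) simp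
    also have "\<dots> \<le> sq_opnorm M N B * (sq_opnorm M N B * sq_norm M f)"
      by (intro mult_mono sq_opnorm_A_le_sq_opnorm_B sq_norm_B_le f sq_opnorm_nonneg)
        (auto intro: sq_norm_nonneg)
    also have "\<dots> \<le> sq_opnorm M N B * (sq_opnorm M N B * 1)"
      by (intro mult_left_mono f1 sq_opnorm_nonneg)
    finally show "sq_norm M (A (B f)) \<le> (sq_opnorm M N B)\<^sup>2" by (simp add: power2_eq_square)
  qed
  define a where "a = sq_opnorm M M (\<lambda>f. A (B f))"
  have a_upper: "sq_norm M (A (B f)) \<le> a" if "f \<in> L2_unit_ball M" for f
    unfolding a_def sq_opnorm_def
  proof (rule cSUP_upper[OF that])
    show "bdd_above ((\<lambda>f. sq_norm M (A (B f))) ` L2_unit_ball M)"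
      by (rule bdd_aboveI[of _ 1]) (use AB_contraction in \<open>force simp: L2_unit_ball_def\<close>)
  qed
  have a_nonneg: "0 \<le> a"
    using a_upper[OF zero_in_L2_unit_ball] sq_norm_nonneg[of M "A (B (\<lambda>_. 0))"] by linarith
  have "sq_opnorm M N B \<le> sqrt a"
    unfolding sq_opnorm_def[of M N B]
  proof (rule cSUP_least)
    show "L2_unit_ball M \<noteq> {}" using zero_in_L2_unit_ball by auto
  next
    fix f assume f_ball: "f \<in> L2_unit_ball M"
    then have f: "square_integrable M f" and f1: "sq_norm M f \<le> 1" by (auto simp: L2_unit_ball_def)
    have Bf: "square_integrable N (B f)" and ABf: "square_integrable M (A (B f))"
      using B_contraction[OF f] AB_contraction[OF f] by auto
    have "sq_norm N (B f) = (\<integral>x. A (B f) x * f x \<partial>M)"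
      unfolding sq_norm_eq_integral_mult_self using adjoint[OF f Bf] by simp
    then have "(sq_norm N (B f))\<^sup>2 \<le> sq_norm M (A (B f)) * sq_norm M f"
      using Cauchy_Schwarz_sq_norm[OF ABf f] by simp
    also have "\<dots> \<le> a * 1"
      by (intro mult_mono a_upper f_ball f1 a_nonneg) (auto intro: sq_norm_nonneg)
    finally show "sq_norm N (B f) \<le> sqrt a"
      using sq_norm_nonneg[of N "B f"] real_le_rsqrt by simp
  qed
  then have "(sq_opnorm M N B)\<^sup>2 \<le> (sqrt a)\<^sup>2"
    by (intro power_mono sq_opnorm_nonneg)
  then show "(sq_opnorm M N B)\<^sup>2 \<le> sq_opnorm M M (\<lambda>f. A (B f))"
    using a_nonneg by (simp add: a_def)
qed

theorem sq_opnorm_comp_commute: "sq_opnorm M M (\<lambda>f. A (B f)) = sq_opnorm N N (\<lambda>g. B (A g))"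
proof -
  interpret swapped: adjoint_contractions N M B A by (rule swap)
  have "sq_opnorm N M A = sq_opnorm M N B"
    using sq_opnorm_A_le_sq_opnorm_B swapped.sq_opnorm_A_le_sq_opnorm_B by simp
  then show ?thesis using sq_opnorm_comp swapped.sq_opnorm_comp by simp
qed

end

lemma L2_unit_ball_eq:
  "{f \<in> borel_measurable M. (\<integral>\<^sup>+x. ennreal ((f x)\<^sup>2) \<partial>M) \<le> 1} = L2_unit_ball M"
proof (intro equalityI subsetI)
  fix f assume "f \<in> {f \<in> borel_measurable M. (\<integral>\<^sup>+x. ennreal ((f x)\<^sup>2) \<partial>M) \<le> 1}"
  then have f_meas: "f \<in> borel_measurable M" and f1: "(\<integral>\<^sup>+x. ennreal ((f x)\<^sup>2) \<partial>M) \<le> 1"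
    by auto
  have "(\<integral>\<^sup>+x. ennreal ((f x)\<^sup>2) \<partial>M) < \<infinity>"
    using f1 by (simp add: le_less_trans)
  then have f: "square_integrable M f"
    using f_meas by (simp add: square_integrable_iff_nn_integral)
  then show "f \<in> L2_unit_ball M"
    using f1 by (simp add: L2_unit_ball_def nn_integral_square_eq_sq_norm ennreal_le_1)
next
  fix f assume "f \<in> L2_unit_ball M"
  then show "f \<in> {f \<in> borel_measurable M. (\<integral>\<^sup>+x. ennreal ((f x)\<^sup>2) \<partial>M) \<le> 1}"
    by (simp add: L2_unit_ball_def nn_integral_square_eq_sq_norm ennreal_le_1 square_integrable_def)
qed

lemma L2_opnorm_eq_sq_opnorm:
  assumes eq: "\<And>f. f \<in> L2_unit_ball M \<Longrightarrow> (\<integral>\<^sup>+x. ennreal ((T f x)\<^sup>2) \<partial>M) = ennreal (sq_norm M (S f))"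
    and bdd: "\<And>f. f \<in> L2_unit_ball M \<Longrightarrow> sq_norm M (S f) \<le> 1"
  shows "L2_opnorm M T = ereal (sqrt (sq_opnorm M M S))"
proof -
  have "bdd_above ((\<lambda>f. sq_norm M (S f)) ` L2_unit_ball M)"
    by (rule bdd_aboveI[of _ 1]) (use bdd in auto)
  then have nonneg: "0 \<le> sq_opnorm M M S"
    unfolding sq_opnorm_def
    by (rule cSUP_upper2[OF _ zero_in_L2_unit_ball]) (rule sq_norm_nonneg)
  have "(SUP f \<in> {f \<in> borel_measurable M. (\<integral>\<^sup>+x. ennreal ((f x)\<^sup>2) \<partial>M) \<le> 1}.
      \<integral>\<^sup>+x. ennreal ((T f x)\<^sup>2) \<partial>M) = (SUP f \<in> L2_unit_ball M. ennreal (sq_norm M (S f)))"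
    unfolding L2_unit_ball_eq by (rule SUP_cong) (auto simp: eq)
  also have "\<dots> = ennreal (sq_opnorm M M S)"
    unfolding sq_opnorm_def
  proof (rule ennreal_SUP[symmetric])
    have "(SUP f \<in> L2_unit_ball M. ennreal (sq_norm M (S f))) \<le> 1"
      by (rule SUP_least) (use bdd in \<open>simp add: ennreal_le_1\<close>)
    then show "(SUP f \<in> L2_unit_ball M. ennreal (sq_norm M (S f))) \<noteq> \<top>"
      using ennreal_one_less_top by (metis leD)
  qed (use zero_in_L2_unit_ball in auto)
  finally show ?thesis unfolding L2_opnorm_def Let_def using nonneg by simp
qed

lemma L2_opnorm_null_space:
  assumes "emeasure M (space M) = 0"
  shows "L2_opnorm M T = 0"
proof -
  have "AE x in M. False"
    using assms by (intro AE_I'[of "space M"]) auto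
  then have null: "(\<integral>\<^sup>+x. g x \<partial>M) = 0" for g
    by (subst nn_integral_cong_AE[where v="\<lambda>_. 0"]) auto
  have "(SUP f \<in> {f \<in> borel_measurable M. (\<integral>\<^sup>+x. ennreal ((f x)\<^sup>2) \<partial>M) \<le> 1}.
      \<integral>\<^sup>+x. ennreal ((T f x)\<^sup>2) \<partial>M) = 0"
    unfolding null by (simp add: bot_ennreal[symmetric])
  then show ?thesis unfolding L2_opnorm_def Let_def by (simp add: zero_ereal_def)
qed

lemma spectral_gap_cong_AE:
  assumes "AE x in M. K x = K' x"
  shows "spectral_gap M K = spectral_gap M K'"
proof -
  have "(\<integral>\<^sup>+x. ennreal ((kernel_op K f x - (\<integral>y. f y \<partial>M))\<^sup>2) \<partial>M)
      = (\<integral>\<^sup>+x. ennreal ((kernel_op K' f x - (\<integral>y. f y \<partial>M))\<^sup>2) \<partial>M)" for f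
    by (rule nn_integral_cong_AE) (use assms in \<open>eventually_elim, simp add: kernel_op_def\<close>)
  then show ?thesis unfolding spectral_gap_def L2_opnorm_def by simp
qed

section \<open>Markov kernels in duality\<close>

definition centred_op :: "('a \<Rightarrow> 'b measure) \<Rightarrow> 'b measure \<Rightarrow> ('b \<Rightarrow> real) \<Rightarrow> 'a \<Rightarrow> real" where
  "centred_op K N g = (\<lambda>x. kernel_op K g x - (\<integral>t. g t \<partial>N))"

lemma centred_op_mult: "centred_op K N (\<lambda>t. c * g t) = (\<lambda>x. c * centred_op K N g x)"
  by (auto simp: centred_op_def kernel_op_def algebra_simps)

lemma (in prob_space) integral_diff_const:
  "integrable M f \<Longrightarrow> (\<integral>x. f x - c \<partial>M) = (\<integral>x. f x \<partial>M) - (c::real)"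
  by (simp add: prob_space)

lemma (in prob_space) centred_square_integrable:
  assumes "square_integrable M f"
  shows "square_integrable M (\<lambda>x. f x - expectation f)"
    and "sq_norm M (\<lambda>x. f x - expectation f) = sq_norm M f - (expectation f)\<^sup>2"
proof -
  have [measurable]: "f \<in> borel_measurable M" and f2: "integrable M (\<lambda>x. (f x)\<^sup>2)"
    using assms by (auto simp: square_integrable_def)
  have f1: "integrable M f" by (rule square_integrable_imp_integrable) (use f2 in auto)
  define c where "c = expectation f"
  have eq: "(\<lambda>x. (f x - c)\<^sup>2) = (\<lambda>x. (f x)\<^sup>2 - 2 * c * f x + c\<^sup>2)"
    by (auto simp: power2_eq_square algebra_simps)
  show "square_integrable M (\<lambda>x. f x - expectation f)"
    using f1 f2 unfolding square_integrable_def c_def[symmetric] eq by auto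
  show "sq_norm M (\<lambda>x. f x - expectation f) = sq_norm M f - (expectation f)\<^sup>2"
    using f1 f2 unfolding sq_norm_def c_def[symmetric] eq
    by (simp add: prob_space c_def power2_eq_square)
qed

text \<open>The last assumption says that \<open>M\<close> followed by \<open>V\<close> and \<open>N\<close> followed by \<open>U\<close> are the
  same joint distribution, read in opposite directions: \<open>U\<close> is the reversal of \<open>V\<close>.\<close>
locale kernel_duality =
  fixes M :: "'a measure" and N :: "'b measure"
    and V :: "'a \<Rightarrow> 'b measure" and U :: "'b \<Rightarrow> 'a measure"
  assumes prob_space_M: "prob_space M" and prob_space_N: "prob_space N"
    and V_measurable[measurable]: "V \<in> M \<rightarrow>\<^sub>M subprob_algebra N"
    and U_measurable[measurable]: "U \<in> N \<rightarrow>\<^sub>M subprob_algebra M"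
    and AE_prob_space_V: "AE x in M. prob_space (V x)"
    and AE_prob_space_U: "AE t in N. prob_space (U t)"
    and nn_integral_duality: "\<And>h. (\<lambda>(x, t). h x t) \<in> borel_measurable (M \<Otimes>\<^sub>M N) \<Longrightarrow>
      (\<integral>\<^sup>+x. \<integral>\<^sup>+t. h x t \<partial>V x \<partial>M) = (\<integral>\<^sup>+t. \<integral>\<^sup>+x. h x t \<partial>U t \<partial>N)"
begin

lemma swap: "kernel_duality N M U V"
proof (rule kernel_duality.intro)
  fix h :: "'b \<Rightarrow> 'a \<Rightarrow> ennreal"
  assume "(\<lambda>(t, x). h t x) \<in> borel_measurable (N \<Otimes>\<^sub>M M)"
  then have "(\<lambda>(x, t). h t x) \<in> borel_measurable (M \<Otimes>\<^sub>M N)"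
    using measurable_pair_swap by fastforce
  then show "(\<integral>\<^sup>+t. \<integral>\<^sup>+x. h t x \<partial>U t \<partial>N) = (\<integral>\<^sup>+x. \<integral>\<^sup>+t. h t x \<partial>V x \<partial>M)"
    by (simp add: nn_integral_duality)
qed (fact prob_space_N prob_space_M U_measurable V_measurable AE_prob_space_U AE_prob_space_V)+

lemma subprob_space_V: "x \<in> space M \<Longrightarrow> subprob_space (V x)"
  using measurable_space[OF V_measurable] by (simp add: space_subprob_algebra)

lemma borel_measurable_V: "g \<in> borel_measurable N \<Longrightarrow> x \<in> space M \<Longrightarrow> g \<in> borel_measurable (V x)"
  using sets_kernel[OF V_measurable] by (simp cong: measurable_cong_sets)

lemma kernel_op_V_measurable[measurable]: "g \<in> borel_measurable N \<Longrightarrow> kernel_op V g \<in> borel_measurable M"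
  unfolding kernel_op_def by (rule measurable_compose[OF V_measurable integral_measurable_subprob_algebra])

lemma nn_integral_V_le: "(\<lambda>t. h t) \<in> borel_measurable N \<Longrightarrow>
    (\<integral>\<^sup>+x. \<integral>\<^sup>+t. h t \<partial>V x \<partial>M) \<le> (\<integral>\<^sup>+t. h t \<partial>N)"
proof -
  assume [measurable]: "(\<lambda>t. h t) \<in> borel_measurable N"
  interpret swapped: kernel_duality N M U V by (rule swap)
  have "(\<integral>\<^sup>+x. \<integral>\<^sup>+t. h t \<partial>V x \<partial>M) = (\<integral>\<^sup>+t. \<integral>\<^sup>+x. h t \<partial>U t \<partial>N)"
    by (rule nn_integral_duality) measurable
  also have "\<dots> \<le> (\<integral>\<^sup>+t. h t \<partial>N)"
    by (intro nn_integral_mono subprob_space.nn_integral_const_le swapped.subprob_space_V)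
  finally show ?thesis .
qed

lemma nn_integral_square_kernel_op_V_le:
  assumes [measurable]: "g \<in> borel_measurable N"
  shows "(\<integral>\<^sup>+x. ennreal ((kernel_op V g x)\<^sup>2) \<partial>M) \<le> (\<integral>\<^sup>+t. ennreal ((g t)\<^sup>2) \<partial>N)"
proof -
  have "(\<integral>\<^sup>+x. ennreal ((kernel_op V g x)\<^sup>2) \<partial>M) \<le> (\<integral>\<^sup>+x. \<integral>\<^sup>+t. ennreal ((g t)\<^sup>2) \<partial>V x \<partial>M)"
    unfolding kernel_op_def
    by (intro nn_integral_mono subprob_space.square_integral_le_nn_integral_square subprob_space_V
        borel_measurable_V) simp_all
  also have "\<dots> \<le> (\<integral>\<^sup>+t. ennreal ((g t)\<^sup>2) \<partial>N)"
    by (rule nn_integral_V_le) simp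
  finally show ?thesis .
qed

lemma nn_integral_abs_mult_finite:
  assumes f: "square_integrable M f" and g: "square_integrable N g"
  shows "(\<integral>\<^sup>+x. \<integral>\<^sup>+t. ennreal \<bar>f x * g t\<bar> \<partial>V x \<partial>M) < \<infinity>"
proof -
  have [measurable]: "f \<in> borel_measurable M" "g \<in> borel_measurable N"
    using f g by (auto simp: square_integrable_def)
  have "(\<integral>\<^sup>+x. \<integral>\<^sup>+t. ennreal \<bar>f x * g t\<bar> \<partial>V x \<partial>M)
      \<le> (\<integral>\<^sup>+x. \<integral>\<^sup>+t. ennreal ((f x)\<^sup>2) + ennreal ((g t)\<^sup>2) \<partial>V x \<partial>M)"
    by (intro nn_integral_mono) (simp add: abs_mult_le_sum_squares flip: ennreal_plus)
  also have "\<dots> = (\<integral>\<^sup>+x. ennreal ((f x)\<^sup>2) * emeasure (V x) (space (V x)) + (\<integral>\<^sup>+t. ennreal ((g t)\<^sup>2) \<partial>V x) \<partial>M)"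
    by (intro nn_integral_cong) (simp add: nn_integral_add borel_measurable_V)
  also have "\<dots> = (\<integral>\<^sup>+x. ennreal ((f x)\<^sup>2) * emeasure (V x) (space (V x)) \<partial>M)
      + (\<integral>\<^sup>+x. \<integral>\<^sup>+t. ennreal ((g t)\<^sup>2) \<partial>V x \<partial>M)"
    by (intro nn_integral_add) measurable
  also have "\<dots> \<le> (\<integral>\<^sup>+x. ennreal ((f x)\<^sup>2) \<partial>M) + (\<integral>\<^sup>+t. ennreal ((g t)\<^sup>2) \<partial>N)"
  proof (intro add_mono nn_integral_mono nn_integral_V_le)
    fix x assume "x \<in> space M"
    show "ennreal ((f x)\<^sup>2) * emeasure (V x) (space (V x)) \<le> ennreal ((f x)\<^sup>2)"
      using subprob_space.nn_integral_const_le[OF subprob_space_V[OF \<open>x \<in> space M\<close>]] by simp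
  qed simp
  also have "\<dots> < \<infinity>"
    using f g by (simp add: square_integrable_iff_nn_integral ennreal_add_less_top)
  finally show ?thesis .
qed

lemma integral_duality:
  fixes F :: "'a \<Rightarrow> 'b \<Rightarrow> real"
  assumes F[measurable]: "(\<lambda>(x, t). F x t) \<in> borel_measurable (M \<Otimes>\<^sub>M N)"
    and V_integral[measurable]: "(\<lambda>x. \<integral>t. F x t \<partial>V x) \<in> borel_measurable M"
    and U_integral[measurable]: "(\<lambda>t. \<integral>x. F x t \<partial>U t) \<in> borel_measurable N"
    and finite: "(\<integral>\<^sup>+x. \<integral>\<^sup>+t. ennreal \<bar>F x t\<bar> \<partial>V x \<partial>M) < \<infinity>"
  shows "AE x in M. integrable (V x) (F x)"
    and "integrable M (\<lambda>x. \<integral>t. F x t \<partial>V x)"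
    and "integrable N (\<lambda>t. \<integral>x. F x t \<partial>U t)"
    and "(\<integral>x. \<integral>t. F x t \<partial>V x \<partial>M) = (\<integral>t. \<integral>x. F x t \<partial>U t \<partial>N)"
proof -
  have F_swap: "(\<lambda>(t, x). F x t) \<in> borel_measurable (N \<Otimes>\<^sub>M M)"
    using measurable_pair_swap[OF F] by simp
  have duality: "(\<integral>\<^sup>+x. \<integral>\<^sup>+t. ennreal (\<phi> (F x t)) \<partial>V x \<partial>M) = (\<integral>\<^sup>+t. \<integral>\<^sup>+x. ennreal (\<phi> (F x t)) \<partial>U t \<partial>N)"
    if [measurable]: "\<phi> \<in> borel_measurable borel" for \<phi> :: "real \<Rightarrow> real"
    by (rule nn_integral_duality) measurable
  note V_side = iterated_integral_kernel[OF V_measurable F V_integral finite]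
  have "(\<integral>\<^sup>+t. \<integral>\<^sup>+x. ennreal \<bar>F x t\<bar> \<partial>U t \<partial>N) < \<infinity>"
    using finite duality[of abs] by simp
  note U_side = iterated_integral_kernel[OF U_measurable F_swap U_integral this]
  show "AE x in M. integrable (V x) (F x)" by (rule V_side(1))
  show "integrable M (\<lambda>x. \<integral>t. F x t \<partial>V x)" by (rule V_side(2))
  show "integrable N (\<lambda>t. \<integral>x. F x t \<partial>U t)" by (rule U_side(2))
  show "(\<integral>x. \<integral>t. F x t \<partial>V x \<partial>M) = (\<integral>t. \<integral>x. F x t \<partial>U t \<partial>N)"
    unfolding V_side(3) U_side(3) using duality[of "\<lambda>s. s"] duality[of uminus] by simp
qed

lemma kernel_op_V_integrable:
  assumes g: "square_integrable N g"
  shows "AE x in M. integrable (V x) g"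
    and "integrable M (kernel_op V g)"
    and "(\<integral>x. kernel_op V g x \<partial>M) = (\<integral>t. g t \<partial>N)"
proof -
  have g_measurable[measurable]: "g \<in> borel_measurable N" using g by (simp add: square_integrable_def)
  have one: "square_integrable M (\<lambda>_. 1)"
    using prob_space_M by (simp add: square_integrable_def prob_space_def finite_measure.integrable_const)
  have finite: "(\<integral>\<^sup>+x. \<integral>\<^sup>+t. ennreal \<bar>g t\<bar> \<partial>V x \<partial>M) < \<infinity>"
    using nn_integral_abs_mult_finite[OF one g] by simp
  have U_const: "(\<integral>x. g t \<partial>U t) = (\<integral>x. 1 \<partial>U t) * g t" for t
    by simp
  have U_integral: "(\<lambda>t. \<integral>x. g t \<partial>U t) \<in> borel_measurable N"
    unfolding U_const by (intro borel_measurable_times measurable_compose[OF U_measurable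
        integral_measurable_subprob_algebra]) simp_all
  note duality = integral_duality[where F="\<lambda>x t. g t", OF _ _ U_integral finite, unfolded kernel_op_def[symmetric]]
  show "AE x in M. integrable (V x) g" using duality(1) by simp
  show "integrable M (kernel_op V g)" using duality(2) by (simp add: kernel_op_def[abs_def])
  have "AE t in N. (\<integral>x. g t \<partial>U t) = g t"
    using AE_prob_space_U by eventually_elim (simp add: prob_space.prob_space)
  then have "(\<integral>t. \<integral>x. g t \<partial>U t \<partial>N) = (\<integral>t. g t \<partial>N)"
    using g_measurable by (intro integral_cong_AE[OF U_integral]) auto
  then show "(\<integral>x. kernel_op V g x \<partial>M) = (\<integral>t. g t \<partial>N)"
    using duality(4) by (simp add: kernel_op_def[abs_def])
qed

lemma kernel_op_adjoint:
  assumes f: "square_integrable M f" and g: "square_integrable N g"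
  shows "integrable M (\<lambda>x. f x * kernel_op V g x)" and "integrable N (\<lambda>t. kernel_op U f t * g t)"
    and "(\<integral>x. f x * kernel_op V g x \<partial>M) = (\<integral>t. kernel_op U f t * g t \<partial>N)"
proof -
  interpret swapped: kernel_duality N M U V by (rule swap)
  have [measurable]: "f \<in> borel_measurable M" "g \<in> borel_measurable N"
    using f g by (auto simp: square_integrable_def)
  have V_integral: "(\<lambda>x. \<integral>t. f x * g t \<partial>V x) = (\<lambda>x. f x * kernel_op V g x)"
    and U_integral: "(\<lambda>t. \<integral>x. f x * g t \<partial>U t) = (\<lambda>t. kernel_op U f t * g t)"
    by (simp_all add: kernel_op_def)
  note duality = integral_duality[where F="\<lambda>x t. f x * g t", unfolded V_integral U_integral,
      OF _ _ _ nn_integral_abs_mult_finite[OF f g]]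
  show "integrable M (\<lambda>x. f x * kernel_op V g x)" by (rule duality(2)) measurable
  show "integrable N (\<lambda>t. kernel_op U f t * g t)"
    by (rule duality(3)) measurable
  show "(\<integral>x. f x * kernel_op V g x \<partial>M) = (\<integral>t. kernel_op U f t * g t \<partial>N)"
    by (rule duality(4)) measurable
qed

lemma square_integrable_kernel_op_V:
  assumes g: "square_integrable N g"
  shows "square_integrable M (kernel_op V g) \<and> sq_norm M (kernel_op V g) \<le> sq_norm N g"
proof -
  have [measurable]: "g \<in> borel_measurable N" using g by (simp add: square_integrable_def)
  have le: "(\<integral>\<^sup>+x. ennreal ((kernel_op V g x)\<^sup>2) \<partial>M) \<le> ennreal (sq_norm N g)"
    using nn_integral_square_kernel_op_V_le[of g] by (simp add: nn_integral_square_eq_sq_norm[OF g])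
  then have Vg: "square_integrable M (kernel_op V g)"
    by (simp add: square_integrable_iff_nn_integral le_less_trans)
  with le show ?thesis
    using sq_norm_nonneg[of N g] by (simp add: nn_integral_square_eq_sq_norm[OF Vg])
qed

lemma centred_op_V_contraction:
  assumes g: "square_integrable N g"
  shows "square_integrable M (centred_op V N g) \<and> sq_norm M (centred_op V N g) \<le> sq_norm N g"
proof -
  interpret prob_space M by (rule prob_space_M)
  have centred: "centred_op V N g = (\<lambda>x. kernel_op V g x - expectation (kernel_op V g))"
    unfolding centred_op_def kernel_op_V_integrable(3)[OF g] ..
  note Vg = square_integrable_kernel_op_V[OF g]
  show ?thesis
    unfolding centred using centred_square_integrable[of "kernel_op V g"] Vg
    by (smt (verit) zero_le_power2)
qed

lemma centred_op_adjoint: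
  assumes f: "square_integrable M f" and g: "square_integrable N g"
  shows "(\<integral>x. centred_op V N g x * f x \<partial>M) = (\<integral>t. g t * centred_op U M f t \<partial>N)"
proof -
  have f1: "integrable M f" and g1: "integrable N g"
    using f g prob_space_M prob_space_N
    by (auto simp: square_integrable_def prob_space_def finite_measure.square_integrable_imp_integrable)
  note adjoint = kernel_op_adjoint[OF f g]
  have "(\<integral>x. centred_op V N g x * f x \<partial>M)
      = (\<integral>x. f x * kernel_op V g x \<partial>M) - (\<integral>t. g t \<partial>N) * (\<integral>x. f x \<partial>M)"
    unfolding centred_op_def using adjoint(1) f1 by (simp add: algebra_simps)
  also have "\<dots> = (\<integral>t. kernel_op U f t * g t \<partial>N) - (\<integral>x. f x \<partial>M) * (\<integral>t. g t \<partial>N)"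
    using adjoint(3) by simp
  also have "\<dots> = (\<integral>t. g t * centred_op U M f t \<partial>N)"
    unfolding centred_op_def using adjoint(2) g1 by (simp add: algebra_simps)
  finally show ?thesis .
qed

lemma adjoint_contractions: "adjoint_contractions M N (centred_op V N) (centred_op U M)"
proof -
  interpret swapped: kernel_duality N M U V by (rule swap)
  show ?thesis
    by unfold_locales (simp_all add: centred_op_V_contraction swapped.centred_op_V_contraction
        centred_op_adjoint centred_op_mult)
qed

lemma kernel_op_bind_AE:
  assumes f: "integrable M f"
  shows "AE x in M. kernel_op (\<lambda>x. V x \<bind> U) f x = kernel_op V (kernel_op U f) x"
proof -
  interpret swapped: kernel_duality N M U V by (rule swap)
  have [measurable]: "f \<in> borel_measurable M" using f by simp
  define H where "H t = (\<integral>\<^sup>+y. ennreal \<bar>f y\<bar> \<partial>U t)" for t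
  have [measurable]: "H \<in> borel_measurable N"
    unfolding H_def by (rule measurable_compose[OF U_measurable nn_integral_measurable_subprob_algebra]) simp
  have "(\<integral>\<^sup>+x. \<integral>\<^sup>+t. H t \<partial>V x \<partial>M) \<le> (\<integral>\<^sup>+t. H t \<partial>N)"
    by (rule nn_integral_V_le) simp
  also have "\<dots> \<le> (\<integral>\<^sup>+y. ennreal \<bar>f y\<bar> \<partial>M)"
    unfolding H_def by (rule swapped.nn_integral_V_le) simp
  also have "\<dots> < \<infinity>" using f by (simp add: integrable_iff_bounded)
  finally have "AE x in M. (\<integral>\<^sup>+t. H t \<partial>V x) \<noteq> \<infinity>"
    by (intro nn_integral_PInf_AE measurable_compose[OF V_measurable nn_integral_measurable_subprob_algebra])
      simp_all
  then show ?thesis using AE_prob_space_V AE_space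
  proof eventually_elim
    case (elim x)
    have U_V[measurable]: "U \<in> V x \<rightarrow>\<^sub>M subprob_algebra M"
      using U_measurable sets_kernel[OF V_measurable elim(3)] by (simp cong: measurable_cong_sets)
    have "(\<integral>\<^sup>+y. ennreal \<bar>f y\<bar> \<partial>(V x \<bind> U)) = (\<integral>\<^sup>+t. H t \<partial>V x)"
      unfolding H_def by (rule nn_integral_bind[OF _ U_V]) measurable
    then show ?case
      using elim prob_space.not_empty[OF elim(2)]
      by (simp add: kernel_op_def integral_bind_real[OF U_V] less_top)
  qed
qed

lemma centred_bind_AE:
  assumes f: "square_integrable M f"
  shows "AE x in M. kernel_op (\<lambda>x. V x \<bind> U) f x - (\<integral>y. f y \<partial>M) = centred_op V N (centred_op U M f) x"
proof -
  interpret swapped: kernel_duality N M U V by (rule swap)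
  have f1: "integrable M f"
    using f prob_space_M
    by (auto simp: square_integrable_def prob_space_def finite_measure.square_integrable_imp_integrable)
  have Uf: "square_integrable N (kernel_op U f)"
    using swapped.square_integrable_kernel_op_V[OF f] by simp
  have mean_zero: "(\<integral>t. centred_op U M f t \<partial>N) = 0"
    using prob_space_N swapped.kernel_op_V_integrable[OF f]
    by (simp add: centred_op_def prob_space.integral_diff_const)
  show ?thesis
    using kernel_op_bind_AE[OF f1] kernel_op_V_integrable(1)[OF Uf] AE_prob_space_V
  proof eventually_elim
    case (elim x)
    then show ?case
      by (simp add: mean_zero[unfolded centred_op_def] centred_op_def kernel_op_def[of V]
          prob_space.integral_diff_const)
  qed
qed

lemma L2_opnorm_centred_bind:
  "L2_opnorm M (\<lambda>f x. kernel_op (\<lambda>x. V x \<bind> U) f x - (\<integral>y. f y \<partial>M))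
    = ereal (sqrt (sq_opnorm M M (\<lambda>f. centred_op V N (centred_op U M f))))"
proof (rule L2_opnorm_eq_sq_opnorm)
  interpret adjoint_contractions M N "centred_op V N" "centred_op U M" by (rule adjoint_contractions)
  fix f assume "f \<in> L2_unit_ball M"
  then have f: "square_integrable M f" and f1: "sq_norm M f \<le> 1" by (auto simp: L2_unit_ball_def)
  have VUf: "square_integrable M (centred_op V N (centred_op U M f))"
    and le: "sq_norm M (centred_op V N (centred_op U M f)) \<le> sq_norm M f"
    using B_contraction[OF f] A_contraction[of "centred_op U M f"] by auto
  show "sq_norm M (centred_op V N (centred_op U M f)) \<le> 1" using le f1 by simp
  have "(\<integral>\<^sup>+x. ennreal ((kernel_op (\<lambda>x. V x \<bind> U) f x - (\<integral>y. f y \<partial>M))\<^sup>2) \<partial>M)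
      = (\<integral>\<^sup>+x. ennreal ((centred_op V N (centred_op U M f) x)\<^sup>2) \<partial>M)"
    by (rule nn_integral_cong_AE) (use centred_bind_AE[OF f] in \<open>eventually_elim, simp\<close>)
  then show "(\<integral>\<^sup>+x. ennreal ((kernel_op (\<lambda>x. V x \<bind> U) f x - (\<integral>y. f y \<partial>M))\<^sup>2) \<partial>M)
      = ennreal (sq_norm M (centred_op V N (centred_op U M f)))"
    by (simp add: nn_integral_square_eq_sq_norm[OF VUf])
qed

theorem spectral_gap_bind_eq: "spectral_gap M (\<lambda>x. V x \<bind> U) = spectral_gap N (\<lambda>t. U t \<bind> V)"
proof -
  interpret swapped: kernel_duality N M U V by (rule swap)
  interpret adjoint_contractions M N "centred_op V N" "centred_op U M" by (rule adjoint_contractions)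
  show ?thesis
    unfolding spectral_gap_def L2_opnorm_centred_bind swapped.L2_opnorm_centred_bind
      sq_opnorm_comp_commute ..
qed

end

section \<open>Simple slice sampling\<close>

locale slice =
  fixes G :: "'a::euclidean_space set" and \<rho> :: "'a \<Rightarrow> real"
  assumes G_sets[measurable]: "G \<in> sets lebesgue" and \<rho>_pos: "\<And>x. x \<in> G \<Longrightarrow> 0 < \<rho> x"
    and \<rho>_integrable: "set_integrable lebesgue G \<rho>"
begin

definition r :: "'a \<Rightarrow> real" where "r x = indicator G x * \<rho> x"

lemma r_integrable: "integrable lebesgue r"
  using \<rho>_integrable unfolding set_integrable_def r_def[abs_def] by simp

lemma r_measurable[measurable]: "r \<in> borel_measurable lebesgue"
  using r_integrable by (rule borel_measurable_integrable)

lemma r_nonneg: "0 \<le> r x"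
  using \<rho>_pos by (auto simp: r_def indicator_def less_imp_le)

lemma r_pos_iff: "0 < r x \<longleftrightarrow> x \<in> G"
  using \<rho>_pos by (auto simp: r_def indicator_def)

lemma r_eq_\<rho>: "x \<in> G \<Longrightarrow> r x = \<rho> x"
  by (simp add: r_def)

definition Z :: real where "Z = (\<integral>x. r x \<partial>lebesgue)"

lemma Z_nonneg: "0 \<le> Z"
  unfolding Z_def using r_nonneg by simp

lemma nn_integral_r: "(\<integral>\<^sup>+x. ennreal (r x) \<partial>lebesgue) = ennreal Z"
  unfolding Z_def by (rule nn_integral_eq_integral[OF r_integrable]) (simp add: r_nonneg)

lemma set_integral_\<rho>_eq_Z: "(LINT y:G|lebesgue. \<rho> y) = Z"
  unfolding Z_def set_lebesgue_integral_def r_def by simp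

lemma superlevel_eq: "superlevel G \<rho> t = {x \<in> G. t \<le> r x}"
  by (auto simp: superlevel_def r_def)

lemma superlevel_sets[measurable]: "superlevel G \<rho> t \<in> sets lebesgue"
  unfolding superlevel_eq by measurable

lemma superlevel_pos: "0 < t \<Longrightarrow> superlevel G \<rho> t = {x. t \<le> r x}"
  unfolding superlevel_eq using r_pos_iff by force

definition L :: "real \<Rightarrow> ennreal" where "L t = emeasure lebesgue (superlevel G \<rho> t)"

lemma L_finite:
  assumes "0 < t"
  shows "L t < \<infinity>"
proof -
  have "L t = (\<integral>\<^sup>+x. indicator (superlevel G \<rho> t) x \<partial>lebesgue)"
    unfolding L_def by simp
  also have "\<dots> \<le> (\<integral>\<^sup>+x. ennreal (1 / t) * ennreal (r x) \<partial>lebesgue)"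
    using assms r_nonneg
    by (intro nn_integral_mono) (auto simp: superlevel_pos indicator_def ennreal_mult'[symmetric])
  also have "\<dots> = ennreal (1 / t) * ennreal Z"
    by (simp add: nn_integral_cmult nn_integral_r)
  also have "\<dots> < \<infinity>" by (simp add: ennreal_mult_less_top)
  finally show ?thesis .
qed

lemma ennreal_level_fun: "0 < t \<Longrightarrow> ennreal (level_fun G \<rho> t) = L t"
  using L_finite unfolding level_fun_def L_def
  by (simp add: emeasure_eq_ennreal_measure less_top)

lemma L_measurable[measurable]: "L \<in> borel_measurable borel"
proof -
  define S where "S = {p \<in> space (lborel \<Otimes>\<^sub>M lebesgue). snd p \<in> G \<and> fst p \<le> r (snd p)}"
  have "S \<in> sets (lborel \<Otimes>\<^sub>M (lebesgue :: 'a measure))"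
    unfolding S_def by measurable
  then have "(\<lambda>t. emeasure lebesgue (Pair t -` S)) \<in> borel_measurable lborel"
    by (rule lebesgue.measurable_emeasure_Pair)
  moreover have "Pair t -` S = superlevel G \<rho> t" for t
    by (auto simp: S_def superlevel_eq space_pair_measure)
  ultimately show ?thesis unfolding L_def by simp
qed

lemma level_fun_nonneg: "0 \<le> level_fun G \<rho> t"
  by (simp add: level_fun_def)

lemma level_fun_measurable[measurable]: "level_fun G \<rho> \<in> borel_measurable borel"
  unfolding level_fun_def[abs_def] measure_def L_def[symmetric] by measurable

definition hypograph :: "('a \<times> real) set" where "hypograph = {(x, t). 0 < t \<and> t \<le> r x}"

lemma hypograph_sets[measurable]: "hypograph \<in> sets (lebesgue \<Otimes>\<^sub>M lborel)"
proof -
  have "hypograph = {p \<in> space (lebesgue \<Otimes>\<^sub>M lborel). 0 < snd p \<and> snd p \<le> r (fst p)}"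
    by (auto simp: hypograph_def space_pair_measure)
  also have "\<dots> \<in> sets (lebesgue \<Otimes>\<^sub>M lborel)" by measurable
  finally show ?thesis .
qed

lemma nn_integral_hypograph_fibre: "(\<integral>\<^sup>+t. indicator hypograph (x, t) \<partial>lborel) = ennreal (r x)"
proof -
  have "(\<integral>\<^sup>+t. indicator hypograph (x, t) \<partial>lborel) = (\<integral>\<^sup>+t. indicator {0<..r x} t \<partial>lborel)"
    by (intro nn_integral_cong) (auto simp: hypograph_def indicator_def)
  then show ?thesis using r_nonneg[of x] by simp
qed

lemma indicator_hypograph:
  "indicator hypograph (x, t) = (indicator {0<..} t * indicator (superlevel G \<rho> t) x :: ennreal)"
  by (auto simp: hypograph_def indicator_def superlevel_pos)

text \<open>Layer-cake formula: both sides are the Lebesgue measure of the hypograph.\<close>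
lemma nn_integral_L_eq_Z: "(\<integral>\<^sup>+t. indicator {0<..} t * L t \<partial>lborel) = ennreal Z"
proof -
  have "(\<integral>\<^sup>+t. indicator {0<..} t * L t \<partial>lborel) = (\<integral>\<^sup>+t. \<integral>\<^sup>+x. indicator hypograph (x, t) \<partial>lebesgue \<partial>lborel)"
    by (intro nn_integral_cong) (simp add: indicator_hypograph L_def nn_integral_cmult)
  also have "\<dots> = (\<integral>\<^sup>+x. \<integral>\<^sup>+t. indicator hypograph (x, t) \<partial>lborel \<partial>lebesgue)"
    by (rule lebesgue_lborel.Fubini') measurable
  also have "\<dots> = ennreal Z" by (simp add: nn_integral_hypograph_fibre nn_integral_r)
  finally show ?thesis .
qed

lemma integral_level_fun_eq_Z: "(LINT t:{0<..}|lborel. level_fun G \<rho> t) = Z"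
proof -
  have "(\<integral>\<^sup>+t. ennreal (indicator {0<..} t * level_fun G \<rho> t) \<partial>lborel) = ennreal Z"
    unfolding nn_integral_L_eq_Z[symmetric]
    by (intro nn_integral_cong) (auto simp: indicator_def ennreal_level_fun)
  then show ?thesis
    unfolding set_lebesgue_integral_def using Z_nonneg
    by (subst integral_eq_nn_integral) (auto simp: level_fun_nonneg)
qed

definition V :: "'a \<Rightarrow> real measure" where "V x = uniform_measure lborel {0..r x}"
definition U :: "real \<Rightarrow> 'a measure" where "U t = unif_level G \<rho> t"

lemma U_eq_uniform_measure: "U t = uniform_measure lebesgue (superlevel G \<rho> t)"
  by (simp add: U_def unif_level_def)

lemma sets_V[simp, measurable_cong]: "sets (V x) = sets borel"
  by (simp add: V_def)

lemma sets_U[simp, measurable_cong]: "sets (U t) = sets lebesgue"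
  by (simp add: U_eq_uniform_measure)

lemma subprob_space_V: "subprob_space (V x)"
  unfolding V_def by (rule subprob_space_uniform_measure) auto

lemma subprob_space_U: "subprob_space (U t)"
  unfolding U_eq_uniform_measure by (rule subprob_space_uniform_measure) auto

lemma prob_space_V: "x \<in> G \<Longrightarrow> prob_space (V x)"
  unfolding V_def using r_pos_iff[of x] r_nonneg[of x] by (intro prob_space_uniform_measure) auto

lemma prob_space_U: "0 < t \<Longrightarrow> L t \<noteq> 0 \<Longrightarrow> prob_space (U t)"
  unfolding U_eq_uniform_measure using L_finite[of t] by (intro prob_space_uniform_measure) (auto simp: L_def)

lemma V_measurable[measurable]: "V \<in> lebesgue \<rightarrow>\<^sub>M subprob_algebra lborel"
proof (rule measurable_subprob_algebra)
  fix A :: "real set" assume [measurable]: "A \<in> sets lborel"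
  define S where "S = {p \<in> space (lebesgue \<Otimes>\<^sub>M lborel). 0 \<le> snd p \<and> snd p \<le> r (fst p) \<and> snd p \<in> A}"
  have "S \<in> sets ((lebesgue :: 'a measure) \<Otimes>\<^sub>M lborel)" unfolding S_def by measurable
  then have "(\<lambda>x. emeasure lborel (Pair x -` S)) \<in> borel_measurable lebesgue"
    by (rule lborel.measurable_emeasure_Pair)
  moreover have "Pair x -` S = {0..r x} \<inter> A" for x
    by (auto simp: S_def space_pair_measure)
  moreover have "emeasure (V x) A = emeasure lborel ({0..r x} \<inter> A) / ennreal (r x)" for x
    unfolding V_def using r_nonneg[of x] \<open>A \<in> sets lborel\<close> by simp
  ultimately show "(\<lambda>x. emeasure (V x) A) \<in> borel_measurable lebesgue" by simp
qed (auto simp: subprob_space_V)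

lemma U_measurable[measurable]: "U \<in> lborel \<rightarrow>\<^sub>M subprob_algebra lebesgue"
proof (rule measurable_subprob_algebra)
  fix A :: "'a set" assume [measurable]: "A \<in> sets lebesgue"
  define S where "S = {p \<in> space (lborel \<Otimes>\<^sub>M lebesgue). snd p \<in> G \<and> fst p \<le> r (snd p) \<and> snd p \<in> A}"
  have "S \<in> sets (lborel \<Otimes>\<^sub>M (lebesgue :: 'a measure))" unfolding S_def by measurable
  then have "(\<lambda>t. emeasure lebesgue (Pair t -` S)) \<in> borel_measurable lborel"
    by (rule lebesgue.measurable_emeasure_Pair)
  moreover have "Pair t -` S = superlevel G \<rho> t \<inter> A" for t
    by (auto simp: S_def space_pair_measure superlevel_eq)
  moreover have "emeasure (U t) A = emeasure lebesgue (superlevel G \<rho> t \<inter> A) / L t" for t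
    unfolding U_eq_uniform_measure L_def by simp
  ultimately show "(\<lambda>t. emeasure (U t) A) \<in> borel_measurable lborel" by simp
qed (auto simp: subprob_space_U)

lemma slice_kernel_eq_bind:
  assumes "x \<in> G"
  shows "slice_kernel G \<rho> x = V x \<bind> U"
  unfolding slice_kernel_def
proof (rule measure_of_eq_self)
  show sets_eq: "sets (V x \<bind> U) = sets lebesgue"
    by (rule sets_bind[where N=lebesgue]) (simp_all add: V_def)
  show "space (V x \<bind> U) = UNIV"
    using sets_eq_imp_space_eq[OF sets_eq] by simp
  fix A :: "'a set" assume "A \<in> sets lebesgue"
  then show "ennreal ((1 / \<rho> x) * (LINT t:{0..\<rho> x}|lborel. measure (unif_level G \<rho> t) A))
      = emeasure (V x \<bind> U) A"
    using assms r_eq_\<rho>[OF assms] r_nonneg[of x]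
    unfolding V_def by (subst emeasure_bind_uniform_measure[OF U_measurable])
      (auto simp: set_lebesgue_integral_def U_def)
qed

lemma Q_kernel_eq_bind:
  assumes "0 < t"
  shows "Q_kernel G \<rho> t = U t \<bind> V"
  unfolding Q_kernel_def
proof (rule measure_of_eq_self)
  show sets_eq: "sets (U t \<bind> V) = sets borel"
    by (rule sets_bind[where N=borel]) (simp_all add: U_eq_uniform_measure)
  show "space (U t \<bind> V) = UNIV"
    using sets_eq_imp_space_eq[OF sets_eq] by simp
  fix B :: "real set" assume B: "B \<in> sets borel"
  have measure_V: "measure (V x) B = measure lborel (B \<inter> {0..\<rho> x}) / \<rho> x" if "x \<in> G" for x
    using that B r_pos_iff[of x] r_eq_\<rho>[of x] unfolding V_def
    by (subst measure_uniform_measure) (auto simp: Int_commute)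
  have "(\<integral>x. indicator (superlevel G \<rho> t) x * measure (V x) B \<partial>lebesgue)
      = (LINT x:superlevel G \<rho> t|lebesgue. measure lborel (B \<inter> {0..\<rho> x}) / \<rho> x)"
    unfolding set_lebesgue_integral_def
    by (intro Bochner_Integration.integral_cong) (auto simp: indicator_def superlevel_def measure_V)
  then show "ennreal (Q_fun G \<rho> t B) = emeasure (U t \<bind> V) B"
    using B L_finite[OF assms] unfolding U_eq_uniform_measure Q_fun_def L_def
    by (subst emeasure_bind_uniform_measure[OF V_measurable]) auto
qed

definition M :: "'a measure" where "M = target G \<rho>"
definition N :: "real measure" where "N = aux_measure G \<rho>"

lemma M_density: "M = density lebesgue (\<lambda>x. ennreal (r x / Z))"
  unfolding M_def target_def set_integral_\<rho>_eq_Z r_def by simp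

lemma N_density: "N = density lborel (\<lambda>t. ennreal (indicator {0<..} t * level_fun G \<rho> t / Z))"
  unfolding N_def aux_measure_def integral_level_fun_eq_Z by simp

lemma sets_M[simp, measurable_cong]: "sets M = sets lebesgue"
  by (simp add: M_density)

lemma sets_N[simp, measurable_cong]: "sets N = sets borel"
  by (simp add: N_density)

lemma AE_M_in_G: "AE x in M. x \<in> G"
proof -
  have "AE x in lebesgue. 0 < r x / Z \<longrightarrow> x \<in> G"
  proof (intro AE_I2 impI)
    fix x assume "0 < r x / Z"
    then have "0 < r x" using r_nonneg[of x] by (auto simp: zero_less_divide_iff)
    then show "x \<in> G" using r_pos_iff by simp
  qed
  then show ?thesis unfolding M_density by (subst AE_density) (simp, simp)
qed

lemma AE_N_L_nonzero: "AE t in N. 0 < t \<and> L t \<noteq> 0"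
proof -
  have "AE t in lborel. 0 < indicator {0<..} t * level_fun G \<rho> t / Z \<longrightarrow> 0 < t \<and> L t \<noteq> 0"
  proof (intro AE_I2 impI)
    fix t :: real assume pos: "0 < indicator {0<..} t * level_fun G \<rho> t / Z"
    have "0 < t" using pos by (cases "0 < t") auto
    moreover have "level_fun G \<rho> t \<noteq> 0" using pos by auto
    ultimately show "0 < t \<and> L t \<noteq> 0" using ennreal_level_fun[of t] level_fun_nonneg[of t] by auto
  qed
  then show ?thesis unfolding N_density by (subst AE_density) (simp, simp)
qed

lemma prob_space_M: "0 < Z \<Longrightarrow> prob_space M"
proof
  assume "0 < Z"
  have "emeasure M (space M) = (\<integral>\<^sup>+x. ennreal (1 / Z) * ennreal (r x) \<partial>lebesgue)"
    unfolding M_density using \<open>0 < Z\<close> r_nonneg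
    by (subst emeasure_density) (auto intro!: nn_integral_cong simp: ennreal_mult'[symmetric])
  also have "\<dots> = 1"
    using \<open>0 < Z\<close> by (simp add: nn_integral_cmult nn_integral_r ennreal_mult[symmetric])
  finally show "emeasure M (space M) = 1" .
qed

lemma prob_space_N: "0 < Z \<Longrightarrow> prob_space N"
proof
  assume "0 < Z"
  have "emeasure N (space N) = (\<integral>\<^sup>+t. ennreal (1 / Z) * (indicator {0<..} t * L t) \<partial>lborel)"
    unfolding N_density using \<open>0 < Z\<close>
    by (subst emeasure_density)
       (auto intro!: nn_integral_cong simp: indicator_def ennreal_level_fun[symmetric] level_fun_nonneg
         ennreal_mult'[symmetric])
  also have "\<dots> = 1"
    using \<open>0 < Z\<close> by (simp add: nn_integral_cmult nn_integral_L_eq_Z ennreal_mult[symmetric])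
  finally show "emeasure N (space N) = 1" .
qed

lemma nn_integral_V:
  "g \<in> borel_measurable borel \<Longrightarrow>
    (\<integral>\<^sup>+t. g t \<partial>V x) = (\<integral>\<^sup>+t. g t * indicator {0..r x} t \<partial>lborel) / ennreal (r x)"
  unfolding V_def using r_nonneg[of x] by (subst nn_integral_uniform_measure) auto

lemma nn_integral_U:
  "f \<in> borel_measurable lebesgue \<Longrightarrow>
    (\<integral>\<^sup>+x. f x \<partial>U t) = (\<integral>\<^sup>+x. f x * indicator (superlevel G \<rho> t) x \<partial>lebesgue) / L t"
  unfolding U_eq_uniform_measure L_def by (subst nn_integral_uniform_measure) auto

text \<open>Both sides are \<open>1/Z\<close> times the integral of \<open>h\<close> over the hypograph, disintegrated
  along its two coordinates.\<close>
lemma nn_integral_disintegration: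
  assumes "0 < Z" and h[measurable]: "(\<lambda>(x, t). h x t) \<in> borel_measurable (lebesgue \<Otimes>\<^sub>M lborel)"
  shows "(\<integral>\<^sup>+x. \<integral>\<^sup>+t. h x t \<partial>V x \<partial>M) = (\<integral>\<^sup>+t. \<integral>\<^sup>+x. h x t \<partial>U t \<partial>N)"
proof -
  have [measurable]: "(\<lambda>t. h x t) \<in> borel_measurable borel" for x
    using measurable_Pair2[OF h, of x] by simp
  have [measurable]: "(\<lambda>x. h x t) \<in> borel_measurable lebesgue" for t
    using measurable_Pair1[OF h, of t] by simp
  have [measurable]: "(\<lambda>x. \<integral>\<^sup>+t. h x t \<partial>V x) \<in> borel_measurable lebesgue"
    by (rule nn_integral_measurable_subprob_algebra2[OF h V_measurable])
  have [measurable]: "(\<lambda>t. \<integral>\<^sup>+x. h x t \<partial>U t) \<in> borel_measurable lborel"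
    using measurable_pair_swap[OF h]
    by (intro nn_integral_measurable_subprob_algebra2[OF _ U_measurable]) simp
  define hyp where "hyp x t = h x t * indicator hypograph (x, t)" for x t
  have [measurable]: "(\<lambda>(x, t). hyp x t) \<in> borel_measurable (lebesgue \<Otimes>\<^sub>M lborel)"
    unfolding hyp_def by measurable
  have fibre_x: "ennreal (r x / Z) * (\<integral>\<^sup>+t. h x t \<partial>V x) = ennreal (1 / Z) * (\<integral>\<^sup>+t. hyp x t \<partial>lborel)" for x
  proof (cases "0 < r x")
    case False
    then have "r x = 0" using r_nonneg[of x] by simp
    then show ?thesis by (simp add: hyp_def hypograph_def)
  next
    case True
    have "(\<integral>\<^sup>+t. h x t * indicator {0..r x} t \<partial>lborel) = (\<integral>\<^sup>+t. hyp x t \<partial>lborel)"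
      by (rule nn_integral_cong_AE)
         (use AE_lborel_singleton[of 0] in \<open>eventually_elim, auto simp: hyp_def hypograph_def indicator_def\<close>)
    moreover have "ennreal (r x / Z) = ennreal (1 / Z) * ennreal (r x)"
      using True \<open>0 < Z\<close> by (simp add: ennreal_mult'[symmetric])
    ultimately show ?thesis
      using True by (simp add: nn_integral_V ennreal_mult_divide_cancel mult.assoc)
  qed
  have fibre_t: "ennreal (1 / Z) * (\<integral>\<^sup>+x. hyp x t \<partial>lebesgue)
      = ennreal (indicator {0<..} t * level_fun G \<rho> t / Z) * (\<integral>\<^sup>+x. h x t \<partial>U t)" for t
  proof (cases "0 < t")
    case False
    then show ?thesis by (simp add: hyp_def hypograph_def)
  next
    case True
    have hyp_t: "(\<integral>\<^sup>+x. hyp x t \<partial>lebesgue) = (\<integral>\<^sup>+x. h x t * indicator (superlevel G \<rho> t) x \<partial>lebesgue)"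
      using True by (intro nn_integral_cong) (simp add: hyp_def indicator_hypograph)
    have level: "ennreal (indicator {0<..} t * level_fun G \<rho> t / Z) = ennreal (1 / Z) * L t"
      using True \<open>0 < Z\<close> level_fun_nonneg[of t]
      by (simp add: ennreal_level_fun[OF True, symmetric] ennreal_mult'[symmetric])
    show ?thesis
    proof (cases "L t = 0")
      case True
      then have "superlevel G \<rho> t \<in> null_sets lebesgue" by (simp add: L_def null_sets_def)
      then show ?thesis using True by (simp add: hyp_t level nn_integral_null_set)
    next
      case False
      then show ?thesis using L_finite[OF \<open>0 < t\<close>]
        by (simp add: hyp_t level nn_integral_U ennreal_mult_divide_cancel mult.assoc)
    qed
  qed
  have "(\<integral>\<^sup>+x. \<integral>\<^sup>+t. h x t \<partial>V x \<partial>M) = (\<integral>\<^sup>+x. ennreal (1 / Z) * (\<integral>\<^sup>+t. hyp x t \<partial>lborel) \<partial>lebesgue)"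
    unfolding M_density by (subst nn_integral_density) (auto simp: fibre_x)
  also have "\<dots> = ennreal (1 / Z) * (\<integral>\<^sup>+t. \<integral>\<^sup>+x. hyp x t \<partial>lebesgue \<partial>lborel)"
    by (subst nn_integral_cmult) (measurable, simp add: lebesgue_lborel.Fubini')
  also have "\<dots> = (\<integral>\<^sup>+t. ennreal (1 / Z) * (\<integral>\<^sup>+x. hyp x t \<partial>lebesgue) \<partial>lborel)"
    by (rule nn_integral_cmult[symmetric]) measurable
  also have "\<dots> = (\<integral>\<^sup>+t. \<integral>\<^sup>+x. h x t \<partial>U t \<partial>N)"
    unfolding N_density fibre_t by (subst nn_integral_density) auto
  finally show ?thesis .
qed

definition \<rho>_law :: "real \<Rightarrow> real measure" where
  "\<rho>_law t = distr (restrict_space lebesgue (superlevel G \<rho> t)) borel r"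

lemma sets_\<rho>_law[simp]: "sets (\<rho>_law t) = sets borel"
  by (simp add: \<rho>_law_def)

lemma space_\<rho>_law[simp]: "space (\<rho>_law t) = UNIV"
  by (simp add: \<rho>_law_def)

lemma set_integral_superlevel_eq_\<rho>_law:
  fixes \<phi> :: "real \<Rightarrow> real"
  assumes [measurable]: "\<phi> \<in> borel_measurable borel"
  shows "(LINT x:superlevel G \<rho> t|lebesgue. \<phi> (\<rho> x)) = (\<integral>s. \<phi> s \<partial>\<rho>_law t)"
proof -
  have "(LINT x:superlevel G \<rho> t|lebesgue. \<phi> (\<rho> x)) = (LINT x:superlevel G \<rho> t|lebesgue. \<phi> (r x))"
    unfolding set_lebesgue_integral_def
    by (intro Bochner_Integration.integral_cong) (auto simp: indicator_def superlevel_def r_def)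
  also have "\<dots> = (\<integral>x. \<phi> (r x) \<partial>restrict_space lebesgue (superlevel G \<rho> t))"
    unfolding set_lebesgue_integral_def
    using integral_restrict_space[of "superlevel G \<rho> t" lebesgue "\<lambda>x. \<phi> (r x)"] by simp
  also have "\<dots> = (\<integral>s. \<phi> s \<partial>\<rho>_law t)"
    unfolding \<rho>_law_def by (subst integral_distr) (auto intro: measurable_restrict_space1)
  finally show ?thesis .
qed

lemma emeasure_\<rho>_law: "A \<in> sets borel \<Longrightarrow>
    emeasure (\<rho>_law t) A = emeasure lebesgue (r -` A \<inter> superlevel G \<rho> t)"
  unfolding \<rho>_law_def
  by (subst emeasure_distr) (auto intro: measurable_restrict_space1 simp: emeasure_restrict_space)

lemma emeasure_\<rho>_law_finite:
  assumes "0 < t"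
  shows "emeasure (\<rho>_law t) A < \<infinity>"
proof -
  have "emeasure (\<rho>_law t) A \<le> emeasure (\<rho>_law t) UNIV"
    using emeasure_space[of "\<rho>_law t" A] by simp
  also have "\<dots> = L t"
    unfolding L_def by (simp add: emeasure_\<rho>_law)
  also have "\<dots> < \<infinity>" by (rule L_finite[OF assms])
  finally show ?thesis .
qed

text \<open>This is why \<open>Q_fun\<close> depends on \<open>\<rho>\<close> only through \<open>level_fun\<close>.\<close>
lemma emeasure_\<rho>_law_greaterThan:
  assumes "0 < t"
  shows "emeasure (\<rho>_law t) {a<..} = (if a < t then L t else (SUP n. L (a + 1 / Suc n)))"
proof (cases "a < t")
  case True
  then have "r -` {a<..} \<inter> superlevel G \<rho> t = superlevel G \<rho> t"
    by (auto simp: superlevel_eq)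
  then show ?thesis using True by (simp add: emeasure_\<rho>_law L_def)
next
  case False
  have "r -` {a<..} \<inter> superlevel G \<rho> t = (\<Union>n. superlevel G \<rho> (a + 1 / Suc n))"
  proof (intro equalityI subsetI)
    fix x assume "x \<in> r -` {a<..} \<inter> superlevel G \<rho> t"
    then have "a < r x" "x \<in> G" by (auto simp: superlevel_eq)
    then obtain n where "1 / Suc n < r x - a"
      by (metis diff_gt_0_iff_gt nat_approx_posE)
    then have "x \<in> superlevel G \<rho> (a + 1 / Suc n)"
      using \<open>x \<in> G\<close> by (simp add: superlevel_eq)
    then show "x \<in> (\<Union>n. superlevel G \<rho> (a + 1 / Suc n))" by blast
  next
    fix x assume "x \<in> (\<Union>n. superlevel G \<rho> (a + 1 / Suc n))"
    then obtain n where x: "x \<in> G" "a + 1 / Suc n \<le> r x" by (auto simp: superlevel_eq)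
    have "0 < 1 / real (Suc n)" by simp
    then have "a < r x" using x(2) by linarith
    then show "x \<in> r -` {a<..} \<inter> superlevel G \<rho> t"
      using x(1) False by (auto simp: superlevel_eq)
  qed
  moreover have "incseq (\<lambda>n. superlevel G \<rho> (a + 1 / Suc n))"
    by (intro monoI) (auto simp: superlevel_def frac_le intro: order_trans[rotated])
  ultimately have "emeasure (\<rho>_law t) {a<..} = (SUP n. L (a + 1 / Suc n))"
    unfolding L_def by (simp only: emeasure_\<rho>_law[OF borel_open[OF open_greaterThan]])
      (rule SUP_emeasure_incseq[symmetric], auto)
  then show ?thesis using False by simp
qed

lemma kernel_duality_target_aux:
  assumes "0 < Z"
  shows "kernel_duality M N V U"
proof (rule kernel_duality.intro)
  show "prob_space M" "prob_space N"
    using assms by (rule prob_space_M, rule prob_space_N)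
  show "AE x in M. prob_space (V x)"
    using AE_M_in_G by eventually_elim (rule prob_space_V)
  show "AE t in N. prob_space (U t)"
    using AE_N_L_nonzero by eventually_elim (auto intro: prob_space_U)
  show "V \<in> M \<rightarrow>\<^sub>M subprob_algebra N" "U \<in> N \<rightarrow>\<^sub>M subprob_algebra M"
    using V_measurable U_measurable by (simp_all cong: measurable_cong_sets subprob_algebra_cong)
  fix h :: "'a \<Rightarrow> real \<Rightarrow> ennreal"
  assume "(\<lambda>(x, t). h x t) \<in> borel_measurable (M \<Otimes>\<^sub>M N)"
  then have "(\<lambda>(x, t). h x t) \<in> borel_measurable (lebesgue \<Otimes>\<^sub>M lborel)"
    by (simp cong: measurable_cong_sets)
  with assms show "(\<integral>\<^sup>+x. \<integral>\<^sup>+t. h x t \<partial>V x \<partial>M) = (\<integral>\<^sup>+t. \<integral>\<^sup>+x. h x t \<partial>U t \<partial>N)"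
    by (rule nn_integral_disintegration)
qed

theorem spectral_gap_slice_kernel_eq_Q_kernel:
  "spectral_gap (target G \<rho>) (slice_kernel G \<rho>) = spectral_gap (aux_measure G \<rho>) (Q_kernel G \<rho>)"
proof (cases "0 < Z")
  case True
  have "AE x in M. slice_kernel G \<rho> x = V x \<bind> U"
    using AE_M_in_G by eventually_elim (rule slice_kernel_eq_bind)
  then have "spectral_gap M (slice_kernel G \<rho>) = spectral_gap M (\<lambda>x. V x \<bind> U)"
    by (rule spectral_gap_cong_AE)
  also have "\<dots> = spectral_gap N (\<lambda>t. U t \<bind> V)"
    by (rule kernel_duality.spectral_gap_bind_eq[OF kernel_duality_target_aux[OF True]])
  also have "\<dots> = spectral_gap N (Q_kernel G \<rho>)"
  proof (rule spectral_gap_cong_AE)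
    show "AE t in N. U t \<bind> V = Q_kernel G \<rho> t"
      using AE_N_L_nonzero by eventually_elim (simp add: Q_kernel_eq_bind)
  qed
  finally show ?thesis unfolding M_def N_def .
next
  case False
  then have "Z = 0" using Z_nonneg by simp
  then have "emeasure M (space M) = 0" "emeasure N (space N) = 0"
    unfolding M_density N_density by (simp_all add: emeasure_density)
  then show ?thesis
    unfolding spectral_gap_def M_def[symmetric] N_def[symmetric] by (simp add: L2_opnorm_null_space)
qed

end

lemma borel_measurable_measure_Int_atLeastAtMost_divide:
  assumes [measurable]: "B \<in> sets borel"
  shows "(\<lambda>s. measure lborel (B \<inter> {0..s}) / s) \<in> borel_measurable borel"
proof -
  have "mono (\<lambda>s. measure lborel (B \<inter> {0..s}))"
  proof (rule monoI)
    fix s s' :: real assume "s \<le> s'"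
    have "{0..s'} \<in> fmeasurable lborel"
      by (metis cbox_interval fmeasurable_cbox)
    then have "B \<inter> {0..s'} \<in> fmeasurable lborel"
      by (rule fmeasurableI2) auto
    then show "measure lborel (B \<inter> {0..s}) \<le> measure lborel (B \<inter> {0..s'})"
      using \<open>s \<le> s'\<close> by (intro measure_mono_fmeasurable) auto
  qed
  then have "(\<lambda>s. measure lborel (B \<inter> {0..s})) \<in> borel_measurable borel"
    by (rule borel_measurable_mono)
  then show ?thesis by measurable
qed

lemma Q_fun_eq_if_level_fun_eq:
  assumes "slice G \<rho>" and "slice G' \<rho>'"
    and level: "\<forall>t>0. level_fun G \<rho> t = level_fun G' \<rho>' t"
    and "0 < t" and B: "B \<in> sets borel"
  shows "Q_fun G \<rho> t B = Q_fun G' \<rho>' t B"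
proof -
  interpret S: slice G \<rho> by fact
  interpret S': slice G' \<rho>' by fact
  note \<phi>_measurable = borel_measurable_measure_Int_atLeastAtMost_divide[OF B]
  have L_eq: "S.L s = S'.L s" if "0 < s" for s
    using S.ennreal_level_fun[OF that] S'.ennreal_level_fun[OF that] level that by metis
  have "S.\<rho>_law t = S'.\<rho>_law t"
  proof (rule measure_eqI_lessThan)
    fix a :: real
    show "emeasure (S.\<rho>_law t) {a<..} < \<infinity>" by (rule S.emeasure_\<rho>_law_finite[OF \<open>0 < t\<close>])
    have "0 < a + 1 / real (Suc n)" if "\<not> a < t" for n
      using that \<open>0 < t\<close> by (intro add_pos_pos) auto
    then show "emeasure (S.\<rho>_law t) {a<..} = emeasure (S'.\<rho>_law t) {a<..}"
      using L_eq \<open>0 < t\<close>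
      by (simp add: S.emeasure_\<rho>_law_greaterThan S'.emeasure_\<rho>_law_greaterThan)
  qed simp_all
  then show ?thesis
    using level \<open>0 < t\<close>
    unfolding Q_fun_def S.set_integral_superlevel_eq_\<rho>_law[OF \<phi>_measurable]
      S'.set_integral_superlevel_eq_\<rho>_law[OF \<phi>_measurable]
    by (simp add: level_fun_def)
qed

lemma aux_measure_eq_if_level_fun_eq:
  assumes level: "\<forall>t>0. level_fun G \<rho> t = level_fun G' \<rho>' t"
  shows "aux_measure G \<rho> = aux_measure G' \<rho>'"
proof -
  define I where "I = (LINT t:{0<..}|lborel. level_fun G' \<rho>' t)"
  have "(LINT t:{0<..}|lborel. level_fun G \<rho> t) = I"
    unfolding I_def by (rule set_lebesgue_integral_cong) (use level in auto)
  moreover have "(\<lambda>t. ennreal (indicator {0<..} t * level_fun G \<rho> t / I))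
      = (\<lambda>t. ennreal (indicator {0<..} t * level_fun G' \<rho>' t / I))"
    using level by (auto simp: indicator_def)
  ultimately show ?thesis
    unfolding aux_measure_def I_def[symmetric] by simp
qed

lemma Q_kernel_eq_if_Q_fun_eq:
  assumes "\<forall>B\<in>sets borel. Q_fun G \<rho> t B = Q_fun G' \<rho>' t B"
  shows "Q_kernel G \<rho> t = Q_kernel G' \<rho>' t"
  unfolding Q_kernel_def
proof (rule measure_of_eq)
  fix B :: "real set" assume "B \<in> sigma_sets UNIV (sets borel)"
  then have "B \<in> sets borel" by (metis sets.sigma_sets_eq space_borel)
  then show "ennreal (Q_fun G \<rho> t B) = ennreal (Q_fun G' \<rho>' t B)" using assms by simp
qed simp

theorem mainTheorem6:
  fixes G :: "'a::euclidean_space set" and \<rho> :: "'a \<Rightarrow> real"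
    and G' :: "'b::euclidean_space set" and \<rho>' :: "'b \<Rightarrow> real"
  assumes "G \<in> sets lebesgue" and "\<forall>x\<in>G. \<rho> x > 0" and "set_integrable lebesgue G \<rho>"
    and "G' \<in> sets lebesgue" and "\<forall>x\<in>G'. \<rho>' x > 0" and "set_integrable lebesgue G' \<rho>'"
    and "\<forall>t>0. level_fun G \<rho> t = level_fun G' \<rho>' t"
  shows "(\<forall>t>0. \<forall>B\<in>sets borel. Q_fun G \<rho> t B = Q_fun G' \<rho>' t B) \<and>
         spectral_gap (target G \<rho>) (slice_kernel G \<rho>) = spectral_gap (aux_measure G \<rho>) (Q_kernel G \<rho>) \<and>
         spectral_gap (aux_measure G \<rho>) (Q_kernel G \<rho>) = spectral_gap (aux_measure G \<rho>) (Q_kernel G' \<rho>') \<and>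
         spectral_gap (aux_measure G \<rho>) (Q_kernel G' \<rho>') = spectral_gap (target G' \<rho>') (slice_kernel G' \<rho>')"
proof -
  have S: "slice G \<rho>" and S': "slice G' \<rho>'"
    using assms(1-6) by (auto simp: slice_def)
  have Q_fun_eq: "\<forall>t>0. \<forall>B\<in>sets borel. Q_fun G \<rho> t B = Q_fun G' \<rho>' t B"
    using Q_fun_eq_if_level_fun_eq[OF S S' assms(7)] by blast
  have aux_eq: "aux_measure G \<rho> = aux_measure G' \<rho>'"
    by (rule aux_measure_eq_if_level_fun_eq[OF assms(7)])
  have "AE t in aux_measure G \<rho>. Q_kernel G \<rho> t = Q_kernel G' \<rho>' t"
    using slice.AE_N_L_nonzero[OF S] unfolding slice.N_def[OF S]
    by eventually_elim (use Q_fun_eq in \<open>blast intro: Q_kernel_eq_if_Q_fun_eq\<close>)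
  then have "spectral_gap (aux_measure G \<rho>) (Q_kernel G \<rho>) = spectral_gap (aux_measure G \<rho>) (Q_kernel G' \<rho>')"
    by (rule spectral_gap_cong_AE)
  then show ?thesis
    using Q_fun_eq aux_eq slice.spectral_gap_slice_kernel_eq_Q_kernel[OF S]
      slice.spectral_gap_slice_kernel_eq_Q_kernel[OF S']
    by simp
qed

end
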